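(* Let $0\le l\le n$ and let $(S_1,\dots,S_l,U_{l+1},\dots,U_n)$ be an $n$-tuple of doubly non-commuting isometries on a Hilbert space $H$, where $S_1,\dots,S_l$ are pure isometries and $U_{l+1},\dots,U_n$ are unitary. Then there exist a Hilbert space $\mathcal K\supseteq H$, with orthogonal projection $P_H:\mathcal K\to H$, and unitary operators $\mathcal U_1,\dots,\mathcal U_n$ on $\mathcal K$ such that: (1) $(\mathcal U_1,\dots,\mathcal U_n)$ is an $n$-tuple of doubly non-commuting isometries; (2) $\mathcal U_1,\dots,\mathcal U_n$ leave $H$ invariant; (3) the restrictions of $\mathcal U_1,\dots,\mathcal U_n$ to $H$ are $S_1,\dots,S_l,U_{l+1},\dots,U_n$ respectively; (4) $\mathcal U_{l+1}^*,\dots,\mathcal U_n^*$ leave $H$ invariant; (5) the restrictions of $\mathcal U_{l+1}^*,\dots,\mathcal U_n^*$ to $H$ are $U_{l+1}^*,\dots,U_n^*$ respectively; (6) $S_i^*=(P_H\circ\mathcal U_i^* )|_H$ for $i=1,\dots,l$. (Lists whose lower index exceeds the upper index are empty.)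
   Context: Fix $n\ge1$ and $z_{ij}\in\mathbb T$ for $i\ne j$ in $\{1,\dots,n\}$ with $z_{ji}=\overline{z_{ij}}$. An $n$-tuple $(V_1,\dots,V_n)$ of isometries is doubly non-commuting if $V_i^*V_j=\overline{z_{ij}}V_jV_i^*$ for all $i\neq j$. An isometry $S$ on $H$ is a pure isometry if $\{0\}$ is the only $S$-invariant subspace of $H$ on which $S$ acts unitarily. *)

theory Defs
  imports Complex_Main
begin

text \<open>Convention: the inner product is linear in the first and conjugate-linear in the
  second argument.\<close>

record 'a cspace =
  hcarrier :: "'a set"
  hadd :: "'a \<Rightarrow> 'a \<Rightarrow> 'a"
  hscale :: "complex \<Rightarrow> 'a \<Rightarrow> 'a"
  hzero :: "'a"
  hip :: "'a \<Rightarrow> 'a \<Rightarrow> complex"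

definition hminus :: "'a cspace \<Rightarrow> 'a \<Rightarrow> 'a \<Rightarrow> 'a" where
  "hminus K x y = hadd K x (hscale K (-1) y)"

definition hnorm :: "'a cspace \<Rightarrow> 'a \<Rightarrow> real" where
  "hnorm K x = sqrt (Re (hip K x x))"

definition hdist :: "'a cspace \<Rightarrow> 'a \<Rightarrow> 'a \<Rightarrow> real" where
  "hdist K x y = hnorm K (hminus K x y)"

definition chilbert :: "'a cspace \<Rightarrow> bool" where
  "chilbert K \<longleftrightarrow>
     (let C = hcarrier K in
      hzero K \<in> C \<and>
      (\<forall>x\<in>C. \<forall>y\<in>C. hadd K x y \<in> C) \<and>
      (\<forall>a. \<forall>x\<in>C. hscale K a x \<in> C) \<and>
      (\<forall>x\<in>C. \<forall>y\<in>C. \<forall>z\<in>C. hadd K (hadd K x y) z = hadd K x (hadd K y z)) \<and>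
      (\<forall>x\<in>C. \<forall>y\<in>C. hadd K x y = hadd K y x) \<and>
      (\<forall>x\<in>C. hadd K x (hzero K) = x) \<and>
      (\<forall>x\<in>C. hadd K x (hscale K (-1) x) = hzero K) \<and>
      (\<forall>x\<in>C. hscale K 1 x = x) \<and>
      (\<forall>a b. \<forall>x\<in>C. hscale K a (hscale K b x) = hscale K (a * b) x) \<and>
      (\<forall>a b. \<forall>x\<in>C. hscale K (a + b) x = hadd K (hscale K a x) (hscale K b x)) \<and>
      (\<forall>a. \<forall>x\<in>C. \<forall>y\<in>C. hscale K a (hadd K x y) = hadd K (hscale K a x) (hscale K a y)) \<and>
      (\<forall>x\<in>C. \<forall>y\<in>C. \<forall>z\<in>C. hip K (hadd K x y) z = hip K x z + hip K y z) \<and>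
      (\<forall>a. \<forall>x\<in>C. \<forall>y\<in>C. hip K (hscale K a x) y = a * hip K x y) \<and>
      (\<forall>x\<in>C. \<forall>y\<in>C. hip K y x = cnj (hip K x y)) \<and>
      (\<forall>x\<in>C. Im (hip K x x) = 0 \<and> Re (hip K x x) \<ge> 0) \<and>
      (\<forall>x\<in>C. hip K x x = 0 \<longrightarrow> x = hzero K) \<and>
      (\<forall>f. (\<forall>k. f k \<in> C) \<and>
           (\<forall>e>0. \<exists>N. \<forall>m\<ge>N. \<forall>k\<ge>N. hdist K (f m) (f k) < e) \<longrightarrow>
           (\<exists>x\<in>C. (\<lambda>k. hdist K (f k) x) \<longlonglongrightarrow> 0)))"

definition lin_op :: "'a cspace \<Rightarrow> ('a \<Rightarrow> 'a) \<Rightarrow> bool" where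
  "lin_op K T \<longleftrightarrow>
     (\<forall>x\<in>hcarrier K. T x \<in> hcarrier K) \<and>
     (\<forall>x\<in>hcarrier K. \<forall>y\<in>hcarrier K. T (hadd K x y) = hadd K (T x) (T y)) \<and>
     (\<forall>a. \<forall>x\<in>hcarrier K. T (hscale K a x) = hscale K a (T x))"

definition isometry :: "'a cspace \<Rightarrow> ('a \<Rightarrow> 'a) \<Rightarrow> bool" where
  "isometry K T \<longleftrightarrow> lin_op K T \<and> (\<forall>x\<in>hcarrier K. hnorm K (T x) = hnorm K x)"

definition unitary :: "'a cspace \<Rightarrow> ('a \<Rightarrow> 'a) \<Rightarrow> bool" where
  "unitary K T \<longleftrightarrow> isometry K T \<and> T ` hcarrier K = hcarrier K"

text \<open>Adjoint (only its values on the carrier matter).\<close>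

definition is_adjoint :: "'a cspace \<Rightarrow> ('a \<Rightarrow> 'a) \<Rightarrow> ('a \<Rightarrow> 'a) \<Rightarrow> bool" where
  "is_adjoint K T T' \<longleftrightarrow>
     (\<forall>y\<in>hcarrier K. T' y \<in> hcarrier K) \<and>
     (\<forall>x\<in>hcarrier K. \<forall>y\<in>hcarrier K. hip K (T x) y = hip K x (T' y))"

definition adj :: "'a cspace \<Rightarrow> ('a \<Rightarrow> 'a) \<Rightarrow> ('a \<Rightarrow> 'a)" where
  "adj K T = (SOME T'. is_adjoint K T T')"

definition closed_subspace :: "'a cspace \<Rightarrow> 'a set \<Rightarrow> bool" where
  "closed_subspace K M \<longleftrightarrow>
     M \<subseteq> hcarrier K \<and> hzero K \<in> M \<and>
     (\<forall>x\<in>M. \<forall>y\<in>M. hadd K x y \<in> M) \<and>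
     (\<forall>a. \<forall>x\<in>M. hscale K a x \<in> M) \<and>
     (\<forall>f x. (\<forall>k. f k \<in> M) \<and> x \<in> hcarrier K \<and> (\<lambda>k. hdist K (f k) x) \<longlonglongrightarrow> 0 \<longrightarrow> x \<in> M)"

definition pure_isometry :: "'a cspace \<Rightarrow> ('a \<Rightarrow> 'a) \<Rightarrow> bool" where
  "pure_isometry K S \<longleftrightarrow> isometry K S \<and>
     (\<forall>M. closed_subspace K M \<and> S ` M = M \<longrightarrow> M = {hzero K})"

definition orth_proj :: "'a cspace \<Rightarrow> 'a set \<Rightarrow> 'a \<Rightarrow> 'a" where
  "orth_proj K M w = (SOME p. p \<in> M \<and> (\<forall>m\<in>M. hip K (hminus K w p) m = 0))"

definition dnc_isometries ::
  "'a cspace \<Rightarrow> (nat \<Rightarrow> nat \<Rightarrow> complex) \<Rightarrow> nat \<Rightarrow> (nat \<Rightarrow> 'a \<Rightarrow> 'a) \<Rightarrow> bool" where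
  "dnc_isometries K z n V \<longleftrightarrow>
     (\<forall>i\<in>{1..n}. isometry K (V i)) \<and>
     (\<forall>i\<in>{1..n}. \<forall>j\<in>{1..n}. i \<noteq> j \<longrightarrow>
        (\<forall>x\<in>hcarrier K. adj K (V i) (V j x) = hscale K (cnj (z i j)) (V j (adj K (V i) x))))"

definition isometric_embedding :: "'a cspace \<Rightarrow> 'b cspace \<Rightarrow> ('a \<Rightarrow> 'b) \<Rightarrow> bool" where
  "isometric_embedding H K J \<longleftrightarrow>
     (\<forall>x\<in>hcarrier H. J x \<in> hcarrier K) \<and>
     (\<forall>x\<in>hcarrier H. \<forall>y\<in>hcarrier H. J (hadd H x y) = hadd K (J x) (J y)) \<and>
     (\<forall>a. \<forall>x\<in>hcarrier H. J (hscale H a x) = hscale K a (J x)) \<and>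
     (\<forall>x\<in>hcarrier H. \<forall>y\<in>hcarrier H. hip K (J x) (J y) = hip H x y)"

end

theory Submission
  imports Defs
begin

text \<open>The isometries \<open>S\<^sub>1, \<dots>, S\<^sub>l\<close> are made unitary one at a time.  If \<open>V\<^sub>p\<close> is an
  isometry with wandering subspace \<open>D = ker V\<^sub>p\<^sup>*\<close>, then on \<open>K \<oplus> D \<oplus> D \<oplus> \<dots>\<close> the map
  \<open>(f\<^sub>0, f\<^sub>1, f\<^sub>2, \<dots>) \<mapsto> (V\<^sub>p f\<^sub>0 + f\<^sub>1, f\<^sub>2, f\<^sub>3, \<dots>)\<close> is a unitary extending \<open>V\<^sub>p\<close>.  The doubly
  non-commuting relations make \<open>D\<close> invariant under every other \<open>V\<^sub>j\<close> and \<open>V\<^sub>j\<^sup>*\<close>, so \<open>V\<^sub>j\<close> extends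
  diagonally, acting on the \<open>k\<close>-th summand as \<open>z\<^sub>p\<^sub>j\<^sup>k V\<^sub>j\<close>; these twists are exactly what keeps
  the extended tuple doubly non-commuting, and the diagonal extension is unitary whenever \<open>V\<^sub>j\<close>
  is and its adjoint still extends \<open>V\<^sub>j\<^sup>*\<close>.  After \<open>l\<close> steps every operator is unitary.  Finally,
  for any isometry \<open>U\<close> extending \<open>V\<close>, \<open>V\<^sup>*\<close> is the compression of \<open>U\<^sup>*\<close> to the original space.\<close>

section \<open>Geometry of a complex Hilbert space\<close>

locale chilbert_space =
  fixes K :: "'a cspace"
  assumes chilbert: "chilbert K"
begin

abbreviation "C \<equiv> hcarrier K"

lemmas chilbert_unfolded = chilbert[unfolded chilbert_def Let_def]

lemma zero_in [simp]: "hzero K \<in> C"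
  using chilbert_unfolded by meson
lemma add_in [simp]: "x \<in> C \<Longrightarrow> y \<in> C \<Longrightarrow> hadd K x y \<in> C"
  using chilbert_unfolded by meson
lemma scale_in [simp]: "x \<in> C \<Longrightarrow> hscale K a x \<in> C"
  using chilbert_unfolded by meson
lemma minus_in [simp]: "x \<in> C \<Longrightarrow> y \<in> C \<Longrightarrow> hminus K x y \<in> C"
  by (simp add: hminus_def)
lemma add_assoc: "x \<in> C \<Longrightarrow> y \<in> C \<Longrightarrow> w \<in> C \<Longrightarrow> hadd K (hadd K x y) w = hadd K x (hadd K y w)"
  using chilbert_unfolded by meson
lemma add_commute: "x \<in> C \<Longrightarrow> y \<in> C \<Longrightarrow> hadd K x y = hadd K y x"
  using chilbert_unfolded by meson
lemma add_zero [simp]: "x \<in> C \<Longrightarrow> hadd K x (hzero K) = x"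
  using chilbert_unfolded by meson
lemma add_neg: "x \<in> C \<Longrightarrow> hadd K x (hscale K (-1) x) = hzero K"
  using chilbert_unfolded by meson
lemma ip_add_left [simp]: "x \<in> C \<Longrightarrow> y \<in> C \<Longrightarrow> w \<in> C \<Longrightarrow> hip K (hadd K x y) w = hip K x w + hip K y w"
  using chilbert_unfolded by meson
lemma ip_scale_left [simp]: "x \<in> C \<Longrightarrow> y \<in> C \<Longrightarrow> hip K (hscale K a x) y = a * hip K x y"
  using chilbert_unfolded by meson
lemma ip_commute: "x \<in> C \<Longrightarrow> y \<in> C \<Longrightarrow> hip K y x = cnj (hip K x y)"
  using chilbert_unfolded by meson
lemma ip_self_Im: "x \<in> C \<Longrightarrow> Im (hip K x x) = 0"
  using chilbert_unfolded by meson
lemma ip_self_Re_nonneg: "x \<in> C \<Longrightarrow> Re (hip K x x) \<ge> 0"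
  using chilbert_unfolded by meson
lemma ip_self_eq_zero: "x \<in> C \<Longrightarrow> hip K x x = 0 \<Longrightarrow> x = hzero K"
  using chilbert_unfolded by meson
lemma complete:
  "(\<forall>k. f k \<in> C) \<Longrightarrow> (\<forall>e>0. \<exists>N. \<forall>m\<ge>N. \<forall>k\<ge>N. hdist K (f m) (f k) < e) \<Longrightarrow>
   \<exists>x\<in>C. (\<lambda>k. hdist K (f k) x) \<longlonglongrightarrow> 0"
  using chilbert_unfolded by (elim conjE allE[where x = f]) blast

lemma cnj_ip: "x \<in> C \<Longrightarrow> y \<in> C \<Longrightarrow> cnj (hip K x y) = hip K y x"
  using ip_commute[of x y] by simp
lemma ip_add_right [simp]: "x \<in> C \<Longrightarrow> y \<in> C \<Longrightarrow> w \<in> C \<Longrightarrow> hip K w (hadd K x y) = hip K w x + hip K w y"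
  using ip_commute[of "hadd K x y" w] by (simp add: cnj_ip)
lemma ip_scale_right [simp]: "x \<in> C \<Longrightarrow> y \<in> C \<Longrightarrow> hip K y (hscale K a x) = cnj a * hip K y x"
  using ip_commute[of "hscale K a x" y] by (simp add: cnj_ip)
lemma ip_minus_left [simp]: "x \<in> C \<Longrightarrow> y \<in> C \<Longrightarrow> w \<in> C \<Longrightarrow> hip K (hminus K x y) w = hip K x w - hip K y w"
  by (simp add: hminus_def)
lemma ip_minus_right [simp]: "x \<in> C \<Longrightarrow> y \<in> C \<Longrightarrow> w \<in> C \<Longrightarrow> hip K w (hminus K x y) = hip K w x - hip K w y"
  by (simp add: hminus_def)
lemma ip_zero_left [simp]: "y \<in> C \<Longrightarrow> hip K (hzero K) y = 0"
  using ip_add_left[of y "hscale K (-1) y" y] by (simp add: add_neg)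
lemma ip_zero_right [simp]: "y \<in> C \<Longrightarrow> hip K y (hzero K) = 0"
  using ip_commute[of "hzero K" y] by simp

lemma eq_if_minus_eq_zero:
  assumes x: "x \<in> C" and y: "y \<in> C" and "hminus K x y = hzero K"
  shows "x = y"
proof -
  have "x = hadd K x (hadd K (hscale K (-1) y) y)"
    using add_neg[OF y] add_commute[of y "hscale K (-1) y"] x y by simp
  also have "\<dots> = hadd K (hminus K x y) y"
    using add_assoc x y by (simp add: hminus_def)
  also have "\<dots> = y"
    using assms add_commute[of "hzero K" y] by simp
  finally show ?thesis .
qed

lemma vector_eqI:
  assumes "x \<in> C" "y \<in> C" "\<And>w. w \<in> C \<Longrightarrow> hip K x w = hip K y w"
  shows "x = y"
proof -
  have "hip K (hminus K x y) (hminus K x y) = 0" using assms by simp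
  then have "hminus K x y = hzero K" using assms ip_self_eq_zero by simp
  then show ?thesis using assms eq_if_minus_eq_zero by blast
qed

lemma vector_eqI_right:
  assumes "x \<in> C" "y \<in> C" "\<And>w. w \<in> C \<Longrightarrow> hip K w x = hip K w y"
  shows "x = y"
proof (rule vector_eqI)
  fix w assume "w \<in> C"
  then show "hip K x w = hip K y w" using assms ip_commute by metis
qed (use assms in auto)

lemma scale_zero [simp]: "x \<in> C \<Longrightarrow> hscale K 0 x = hzero K"
  by (rule vector_eqI) simp_all
lemma scale_of_zero [simp]: "hscale K a (hzero K) = hzero K"
  by (rule vector_eqI) simp_all
lemma add_zero_left [simp]: "x \<in> C \<Longrightarrow> hadd K (hzero K) x = x"
  by (rule vector_eqI) simp_all
lemma scale_one [simp]: "x \<in> C \<Longrightarrow> hscale K 1 x = x"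
  by (rule vector_eqI) simp_all
lemma scale_scale [simp]: "x \<in> C \<Longrightarrow> hscale K a (hscale K b x) = hscale K (a * b) x"
  by (rule vector_eqI) simp_all
lemma minus_self [simp]: "x \<in> C \<Longrightarrow> hminus K x x = hzero K"
  by (rule vector_eqI) simp_all
lemma scale_add_left: "x \<in> C \<Longrightarrow> hscale K (a + b) x = hadd K (hscale K a x) (hscale K b x)"
  by (rule vector_eqI) (simp_all add: algebra_simps)
lemma scale_add_right:
  "x \<in> C \<Longrightarrow> y \<in> C \<Longrightarrow> hscale K a (hadd K x y) = hadd K (hscale K a x) (hscale K a y)"
  by (rule vector_eqI) (simp_all add: algebra_simps)

lemma ip_self_eq_hnorm_sq: "x \<in> C \<Longrightarrow> hip K x x = complex_of_real ((hnorm K x)\<^sup>2)"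
  using ip_self_Im[of x] ip_self_Re_nonneg[of x] unfolding hnorm_def by (simp add: complex_eq_iff)
lemma hnorm_nonneg: "x \<in> C \<Longrightarrow> hnorm K x \<ge> 0"
  by (simp add: hnorm_def ip_self_Re_nonneg)
lemma hnorm_sq: "x \<in> C \<Longrightarrow> (hnorm K x)\<^sup>2 = Re (hip K x x)"
  using ip_self_Re_nonneg[of x] unfolding hnorm_def by simp
lemma hnorm_eq_zero_iff: "x \<in> C \<Longrightarrow> hnorm K x = 0 \<longleftrightarrow> x = hzero K"
  using ip_self_eq_hnorm_sq[of x] ip_self_eq_zero[of x] by auto
lemma hnorm_zero [simp]: "hnorm K (hzero K) = 0"
  by (simp add: hnorm_def)

lemma hnorm_sq_add: "x \<in> C \<Longrightarrow> y \<in> C \<Longrightarrow>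
  (hnorm K (hadd K x y))\<^sup>2 = (hnorm K x)\<^sup>2 + (hnorm K y)\<^sup>2 + 2 * Re (hip K x y)"
  using hnorm_sq ip_commute[of x y] by simp
lemma hnorm_sq_minus: "x \<in> C \<Longrightarrow> y \<in> C \<Longrightarrow>
  (hnorm K (hminus K x y))\<^sup>2 = (hnorm K x)\<^sup>2 + (hnorm K y)\<^sup>2 - 2 * Re (hip K x y)"
  using hnorm_sq ip_commute[of x y] by simp
lemma parallelogram: "x \<in> C \<Longrightarrow> y \<in> C \<Longrightarrow>
  (hnorm K (hminus K x y))\<^sup>2 + (hnorm K (hadd K x y))\<^sup>2 = 2 * (hnorm K x)\<^sup>2 + 2 * (hnorm K y)\<^sup>2"
  using hnorm_sq_add[of x y] hnorm_sq_minus[of x y] by simp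

lemma hnorm_scale: "x \<in> C \<Longrightarrow> hnorm K (hscale K a x) = cmod a * hnorm K x"
proof -
  assume x: "x \<in> C"
  have "hip K (hscale K a x) (hscale K a x) = (a * cnj a) * hip K x x"
    using x by simp
  also have "\<dots> = complex_of_real ((cmod a * hnorm K x)\<^sup>2)"
    using ip_self_eq_hnorm_sq[OF x] by (simp add: complex_norm_square[symmetric] power_mult_distrib)
  finally show ?thesis
    using hnorm_nonneg[OF x] unfolding hnorm_def[of K "hscale K a x"] by simp
qed

lemma cauchy_schwarz:
  assumes x: "x \<in> C" and y: "y \<in> C"
  shows "cmod (hip K x y) \<le> hnorm K x * hnorm K y"
proof (cases "y = hzero K")
  case True
  then show ?thesis using x hnorm_nonneg[OF x] by simp
next
  case False
  define a where "a = hip K x y"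
  define r where "r = (hnorm K y)\<^sup>2"
  define t where "t = a / complex_of_real r"
  have r: "r > 0"
    using False hnorm_eq_zero_iff[OF y] hnorm_nonneg[OF y] r_def by (simp add: less_le)
  have aa: "a * cnj a = complex_of_real ((cmod a)\<^sup>2)"
    by (metis complex_norm_square of_real_power)
  \<comment> \<open>\<open>0 \<le> \<parallel>x - t y\<parallel>\<^sup>2\<close> for the optimal \<open>t\<close>\<close>
  have "hip K (hminus K x (hscale K t y)) (hminus K x (hscale K t y))
     = hip K x x - cnj t * a - t * cnj a + t * cnj t * complex_of_real r"
    using x y ip_self_eq_hnorm_sq[OF y] ip_commute[OF x y] a_def r_def by (simp add: algebra_simps)
  also have "\<dots> = hip K x x - a * cnj a / complex_of_real r"
    using r unfolding t_def by (simp add: field_simps)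
  also have "\<dots> = complex_of_real ((hnorm K x)\<^sup>2 - (cmod a)\<^sup>2 / r)"
    using ip_self_eq_hnorm_sq[OF x] aa by simp
  finally have "0 \<le> (hnorm K x)\<^sup>2 - (cmod a)\<^sup>2 / r"
    using ip_self_Re_nonneg[of "hminus K x (hscale K t y)"] x y by simp
  then have "(cmod a)\<^sup>2 \<le> (hnorm K x * hnorm K y)\<^sup>2"
    using r r_def by (simp add: field_simps power_mult_distrib)
  then show ?thesis
    using power2_le_imp_le a_def hnorm_nonneg[OF x] hnorm_nonneg[OF y] by simp
qed

lemma hnorm_triangle:
  assumes x: "x \<in> C" and y: "y \<in> C"
  shows "hnorm K (hadd K x y) \<le> hnorm K x + hnorm K y"
proof -
  have "Re (hip K x y) \<le> hnorm K x * hnorm K y"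
    using cauchy_schwarz[OF x y] complex_Re_le_cmod order_trans by blast
  then have "(hnorm K (hadd K x y))\<^sup>2 \<le> (hnorm K x + hnorm K y)\<^sup>2"
    using hnorm_sq_add[OF x y] by (simp add: power2_sum)
  then show ?thesis using hnorm_nonneg x y power2_le_imp_le by simp
qed

lemma hdist_nonneg: "x \<in> C \<Longrightarrow> y \<in> C \<Longrightarrow> hdist K x y \<ge> 0"
  by (simp add: hdist_def hnorm_nonneg)

lemma hdist_commute: "x \<in> C \<Longrightarrow> y \<in> C \<Longrightarrow> hdist K x y = hdist K y x"
proof -
  assume "x \<in> C" "y \<in> C"
  then have "hminus K y x = hscale K (-1) (hminus K x y)"
    by (intro vector_eqI) (simp_all add: algebra_simps)
  with \<open>x \<in> C\<close> \<open>y \<in> C\<close> show ?thesis by (simp add: hdist_def hnorm_scale)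
qed

lemma hdist_triangle:
  assumes "x \<in> C" "y \<in> C" "w \<in> C"
  shows "hdist K x w \<le> hdist K x y + hdist K y w"
proof -
  have "hminus K x w = hadd K (hminus K x y) (hminus K y w)"
    using assms by (intro vector_eqI) simp_all
  then show ?thesis unfolding hdist_def using hnorm_triangle assms by simp
qed

lemma hdist_eq_zero_iff:
  assumes "x \<in> C" "y \<in> C"
  shows "hdist K x y = 0 \<longleftrightarrow> x = y"
proof
  assume "hdist K x y = 0"
  then have "hminus K x y = hzero K"
    using hnorm_eq_zero_iff[of "hminus K x y"] assms by (simp add: hdist_def)
  then show "x = y" using eq_if_minus_eq_zero assms by blast
qed (use assms in \<open>simp add: hdist_def\<close>)

lemma hnorm_minus_le_hdist:
  assumes x: "x \<in> C" and y: "y \<in> C"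
  shows "\<bar>hnorm K x - hnorm K y\<bar> \<le> hdist K x y"
proof -
  have "hnorm K v = hdist K v (hzero K)" if "v \<in> C" for v
    using that by (simp add: hdist_def hminus_def)
  then show ?thesis
    using hdist_triangle[of x y "hzero K"] hdist_triangle[of y x "hzero K"] hdist_commute[OF x y] x y
    by simp
qed

lemma limit_unique:
  assumes f: "\<forall>k. f k \<in> C" and x: "x \<in> C" and y: "y \<in> C"
    and lim_x: "(\<lambda>k. hdist K (f k) x) \<longlonglongrightarrow> 0" and lim_y: "(\<lambda>k. hdist K (f k) y) \<longlonglongrightarrow> 0"
  shows "x = y"
proof -
  have "hdist K x y \<le> hdist K (f k) x + hdist K (f k) y" for k
    using hdist_triangle[of x "f k" y] hdist_commute[of x "f k"] f x y by simp
  moreover have "(\<lambda>k. hdist K (f k) x + hdist K (f k) y) \<longlonglongrightarrow> 0"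
    using tendsto_add[OF lim_x lim_y] by simp
  ultimately have "hdist K x y \<le> 0"
    by (intro tendsto_lowerbound) (auto intro: always_eventually)
  then show ?thesis using hdist_nonneg hdist_eq_zero_iff x y by (meson antisym)
qed

lemma lin_op_in: "lin_op K T \<Longrightarrow> x \<in> C \<Longrightarrow> T x \<in> C"
  by (simp add: lin_op_def)
lemma lin_op_add: "lin_op K T \<Longrightarrow> x \<in> C \<Longrightarrow> y \<in> C \<Longrightarrow> T (hadd K x y) = hadd K (T x) (T y)"
  by (simp add: lin_op_def)
lemma lin_op_scale: "lin_op K T \<Longrightarrow> x \<in> C \<Longrightarrow> T (hscale K a x) = hscale K a (T x)"
  by (simp add: lin_op_def)
lemma lin_op_zero: "lin_op K T \<Longrightarrow> T (hzero K) = hzero K"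
  using lin_op_scale[of T "hzero K" 0] lin_op_in[of T "hzero K"] by simp
lemma lin_op_minus: "lin_op K T \<Longrightarrow> x \<in> C \<Longrightarrow> y \<in> C \<Longrightarrow> T (hminus K x y) = hminus K (T x) (T y)"
  by (simp add: hminus_def lin_op_add lin_op_scale)

lemma isometry_lin_op: "isometry K V \<Longrightarrow> lin_op K V"
  by (simp add: isometry_def)
lemma isometry_in: "isometry K V \<Longrightarrow> x \<in> C \<Longrightarrow> V x \<in> C"
  by (simp add: isometry_def lin_op_def)
lemma isometry_hnorm: "isometry K V \<Longrightarrow> x \<in> C \<Longrightarrow> hnorm K (V x) = hnorm K x"
  by (simp add: isometry_def)

text \<open>Polarization: preserving the norm means preserving the inner product.\<close>

lemma isometry_ip:
  assumes V: "isometry K V" and x: "x \<in> C" and y: "y \<in> C"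
  shows "hip K (V x) (V y) = hip K x y"
proof -
  note lin = isometry_lin_op[OF V]
  have Re_eq: "Re (hip K (V u) (V w)) = Re (hip K u w)" if u: "u \<in> C" and w: "w \<in> C" for u w
  proof -
    have "(hnorm K (V (hadd K u w)))\<^sup>2 = (hnorm K (hadd K u w))\<^sup>2"
      using isometry_hnorm[OF V] u w by simp
    then show ?thesis
      using hnorm_sq_add[of u w] hnorm_sq_add[of "V u" "V w"] u w lin_op_add[OF lin u w]
        isometry_in[OF V] isometry_hnorm[OF V] by simp
  qed
  have "Im (hip K (V x) (V y)) = Im (hip K x y)"
    using Re_eq[of x "hscale K \<i> y"] lin_op_scale[OF lin y] isometry_in[OF V] x y by simp
  then show ?thesis using Re_eq[OF x y] by (simp add: complex_eq_iff)
qed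

end

section \<open>Orthogonal projection onto closed subspaces\<close>

lemma closed_subspaceD:
  assumes "closed_subspace K M"
  shows "M \<subseteq> hcarrier K" "hzero K \<in> M"
    and "x \<in> M \<Longrightarrow> y \<in> M \<Longrightarrow> hadd K x y \<in> M"
    and "x \<in> M \<Longrightarrow> hscale K a x \<in> M"
    and "(\<forall>k. f k \<in> M) \<Longrightarrow> x \<in> hcarrier K \<Longrightarrow> (\<lambda>k. hdist K (f k) x) \<longlonglongrightarrow> 0 \<Longrightarrow> x \<in> M"
  using assms unfolding closed_subspace_def by blast+

context chilbert_space
begin

lemma minimizer_orthogonal:
  assumes M: "closed_subspace K M" and w: "w \<in> C" and p: "p \<in> M" and m: "m \<in> M"
    and min: "\<And>q. q \<in> M \<Longrightarrow> (hnorm K (hminus K w p))\<^sup>2 \<le> (hnorm K (hminus K w q))\<^sup>2"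
  shows "hip K (hminus K w p) m = 0"
proof (cases "m = hzero K")
  case True
  then show ?thesis using closed_subspaceD(1)[OF M] w p by auto
next
  case False
  have pC: "p \<in> C" and mC: "m \<in> C" using closed_subspaceD(1)[OF M] p m by auto
  define u where "u = hminus K w p"
  define c where "c = hip K u m"
  define r where "r = (hnorm K m)\<^sup>2"
  define t where "t = c / complex_of_real r"
  have uC: "u \<in> C" using u_def w pC by simp
  have r: "r > 0"
    using False hnorm_eq_zero_iff[OF mC] hnorm_nonneg[OF mC] r_def by (simp add: less_le)
  \<comment> \<open>moving from \<open>p\<close> to \<open>p + t m\<close> would decrease the distance by \<open>\<bar>c\<bar>\<^sup>2 / r\<close>\<close>
  have "hip K (hminus K u (hscale K t m)) (hminus K u (hscale K t m))
      = hip K u u - cnj t * c - t * cnj c + t * cnj t * complex_of_real r"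
    using uC mC ip_commute[OF uC mC] ip_self_eq_hnorm_sq[OF mC] c_def r_def by (simp add: algebra_simps)
  also have "\<dots> = hip K u u - c * cnj c / complex_of_real r"
    using r unfolding t_def by (simp add: field_simps)
  also have "\<dots> = complex_of_real ((hnorm K u)\<^sup>2 - (cmod c)\<^sup>2 / r)"
    using ip_self_eq_hnorm_sq[OF uC] by (simp add: complex_norm_square[symmetric])
  finally have "(hnorm K (hminus K u (hscale K t m)))\<^sup>2 = (hnorm K u)\<^sup>2 - (cmod c)\<^sup>2 / r"
    using hnorm_sq[of "hminus K u (hscale K t m)"] uC mC by simp
  moreover have "hminus K w (hadd K p (hscale K t m)) = hminus K u (hscale K t m)"
    unfolding u_def using w pC mC by (intro vector_eqI) simp_all
  moreover have "hadd K p (hscale K t m) \<in> M"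
    using closed_subspaceD(3,4)[OF M] p m by blast
  ultimately have "(cmod c)\<^sup>2 / r \<le> 0" using min u_def by fastforce
  then show ?thesis using r c_def u_def by (simp add: divide_le_0_iff)
qed

lemma near_minimizers_close:
  assumes M: "closed_subspace K M" and w: "w \<in> C" and a: "a \<in> M" and b: "b \<in> M"
    and lower: "\<And>m. m \<in> M \<Longrightarrow> d \<le> (hnorm K (hminus K w m))\<^sup>2"
    and near_a: "(hnorm K (hminus K w a))\<^sup>2 \<le> d + \<epsilon>"
    and near_b: "(hnorm K (hminus K w b))\<^sup>2 \<le> d + \<delta>"
  shows "(hdist K a b)\<^sup>2 \<le> 2 * \<epsilon> + 2 * \<delta>"
proof -
  have aC: "a \<in> C" and bC: "b \<in> C" using closed_subspaceD(1)[OF M] a b by auto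
  define mid where "mid = hscale K (1/2) (hadd K a b)"
  have mid: "mid \<in> M" unfolding mid_def using closed_subspaceD(3,4)[OF M] a b by blast
  have "hminus K (hminus K w a) (hminus K w b) = hminus K b a"
    using w aC bC by (intro vector_eqI) simp_all
  then have "(hdist K a b)\<^sup>2 = (hnorm K (hminus K (hminus K w a) (hminus K w b)))\<^sup>2"
    using hdist_commute[OF aC bC] by (simp add: hdist_def)
  moreover have "hadd K (hminus K w a) (hminus K w b) = hscale K 2 (hminus K w mid)"
    unfolding mid_def using w aC bC by (intro vector_eqI) (simp_all add: algebra_simps)
  then have "(hnorm K (hadd K (hminus K w a) (hminus K w b)))\<^sup>2 = 4 * (hnorm K (hminus K w mid))\<^sup>2"
    using hnorm_scale[of "hminus K w mid" 2] closed_subspaceD(1)[OF M] mid w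
    by (auto simp: power_mult_distrib)
  ultimately have "(hdist K a b)\<^sup>2
      = 2 * (hnorm K (hminus K w a))\<^sup>2 + 2 * (hnorm K (hminus K w b))\<^sup>2 - 4 * (hnorm K (hminus K w mid))\<^sup>2"
    using parallelogram[of "hminus K w a" "hminus K w b"] w aC bC by simp
  then show ?thesis using near_a near_b lower[OF mid] by simp
qed

lemma minimizing_sequence_Cauchy:
  assumes M: "closed_subspace K M" and w: "w \<in> C" and f: "\<And>k. f k \<in> M"
    and lower: "\<And>m. m \<in> M \<Longrightarrow> d \<le> (hnorm K (hminus K w m))\<^sup>2"
    and near: "\<And>k. (hnorm K (hminus K w (f k)))\<^sup>2 < d + inverse (real (Suc k))"
  shows "\<forall>e>0. \<exists>N. \<forall>m\<ge>N. \<forall>k\<ge>N. hdist K (f m) (f k) < e"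
proof (intro allI impI)
  fix e :: real assume e: "e > 0"
  have fC: "f k \<in> C" for k using f closed_subspaceD(1)[OF M] by auto
  obtain N where N: "inverse (real (Suc N)) < e\<^sup>2 / 4"
    using reals_Archimedean[of "e\<^sup>2/4"] e by auto
  have "hdist K (f m) (f k) < e" if "m \<ge> N" "k \<ge> N" for m k
  proof -
    have "inverse (real (Suc m)) \<le> inverse (real (Suc N))" "inverse (real (Suc k)) \<le> inverse (real (Suc N))"
      using that by (simp_all add: field_simps)
    then have "(hdist K (f m) (f k))\<^sup>2 < e\<^sup>2"
      using near_minimizers_close[OF M w f f lower, of m "inverse (real (Suc m))" k "inverse (real (Suc k))"]
        near[of m] near[of k] N by linarith
    then show ?thesis using e hdist_nonneg fC power_less_imp_less_base by fastforce
  qed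
  then show "\<exists>N. \<forall>m\<ge>N. \<forall>k\<ge>N. hdist K (f m) (f k) < e" by blast
qed

lemma nearest_point_exists:
  assumes M: "closed_subspace K M" and w: "w \<in> C"
  shows "\<exists>p\<in>M. \<forall>m\<in>M. (hnorm K (hminus K w p))\<^sup>2 \<le> (hnorm K (hminus K w m))\<^sup>2"
proof -
  define d where "d = Inf ((\<lambda>m. (hnorm K (hminus K w m))\<^sup>2) ` M)"
  have lower: "d \<le> (hnorm K (hminus K w m))\<^sup>2" if "m \<in> M" for m
    unfolding d_def by (rule cInf_lower) (auto intro: that bdd_belowI[of _ 0])
  have "\<exists>m\<in>M. (hnorm K (hminus K w m))\<^sup>2 < d + inverse (real (Suc k))" for k
    using cInf_lessD[of "(\<lambda>m. (hnorm K (hminus K w m))\<^sup>2) ` M" "d + inverse (real (Suc k))"]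
      closed_subspaceD(2)[OF M] unfolding d_def by auto
  then obtain f where f: "\<And>k. f k \<in> M"
    and near: "\<And>k. (hnorm K (hminus K w (f k)))\<^sup>2 < d + inverse (real (Suc k))" by metis
  have fC: "f k \<in> C" for k using f closed_subspaceD(1)[OF M] by auto
  obtain p where pC: "p \<in> C" and lim: "(\<lambda>k. hdist K (f k) p) \<longlonglongrightarrow> 0"
    using complete[of f] fC minimizing_sequence_Cauchy[OF M w f lower near] by blast
  have p: "p \<in> M" using closed_subspaceD(5)[OF M _ pC lim] f by blast
  have bound: "hnorm K (hminus K w p) \<le> sqrt (d + inverse (real (Suc k))) + hdist K (f k) p" for k
  proof -
    have "hminus K w p = hadd K (hminus K w (f k)) (hminus K (f k) p)"
      using w pC fC by (intro vector_eqI) simp_all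
    then have "hnorm K (hminus K w p) \<le> hnorm K (hminus K w (f k)) + hdist K (f k) p"
      using hnorm_triangle[of "hminus K w (f k)" "hminus K (f k) p"] w pC fC by (simp add: hdist_def)
    moreover have "hnorm K (hminus K w (f k)) \<le> sqrt (d + inverse (real (Suc k)))"
      using near[of k] real_le_rsqrt less_imp_le by blast
    ultimately show ?thesis by simp
  qed
  have "(\<lambda>k. sqrt (d + inverse (real (Suc k))) + hdist K (f k) p) \<longlonglongrightarrow> sqrt d + 0"
    by (intro tendsto_add tendsto_real_sqrt LIMSEQ_inverse_real_of_nat_add lim)
  then have "hnorm K (hminus K w p) \<le> sqrt d + 0"
    by (rule LIMSEQ_le_const) (use bound in blast)
  moreover have "d \<ge> 0"
    unfolding d_def using closed_subspaceD(2)[OF M] by (intro cInf_greatest) auto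
  ultimately have "(hnorm K (hminus K w p))\<^sup>2 \<le> d"
    using hnorm_nonneg[of "hminus K w p"] w pC power_mono[of "hnorm K (hminus K w p)" "sqrt d" 2]
    by simp
  then show ?thesis using p lower by (meson order_trans)
qed

lemma projection_exists:
  assumes M: "closed_subspace K M" and w: "w \<in> C"
  shows "\<exists>p\<in>M. \<forall>m\<in>M. hip K (hminus K w p) m = 0"
  using nearest_point_exists[OF M w] minimizer_orthogonal[OF M w] by blast

lemma orth_proj_eqI:
  assumes M: "M \<subseteq> C" and M_minus: "\<And>x y. x \<in> M \<Longrightarrow> y \<in> M \<Longrightarrow> hminus K x y \<in> M"
    and w: "w \<in> C" and p: "p \<in> M" and orth: "\<forall>m\<in>M. hip K (hminus K w p) m = 0"
  shows "orth_proj K M w = p"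
proof -
  define q where "q = orth_proj K M w"
  have q: "q \<in> M" "\<forall>m\<in>M. hip K (hminus K w q) m = 0"
    using someI[of "\<lambda>q. q \<in> M \<and> (\<forall>m\<in>M. hip K (hminus K w q) m = 0)"] p orth
    unfolding q_def orth_proj_def by blast+
  have qp: "hminus K q p \<in> M" using M_minus[OF q(1) p] .
  have qC: "q \<in> C" and pC: "p \<in> C" using M q p by auto
  \<comment> \<open>\<open>q - p = (w - p) - (w - q)\<close> lies in \<open>M\<close> and is orthogonal to \<open>M\<close>\<close>
  have "hip K (hminus K q p) (hminus K q p)
      = hip K (hminus K w p) (hminus K q p) - hip K (hminus K w q) (hminus K q p)"
    using w qC pC by simp
  also have "\<dots> = 0" using orth q(2) qp by simp
  finally show ?thesis using ip_self_eq_zero eq_if_minus_eq_zero qC pC q_def by simp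
qed

end

section \<open>Adjoints\<close>

context chilbert_space
begin

lemma is_adjoint_in: "is_adjoint K T A \<Longrightarrow> y \<in> C \<Longrightarrow> A y \<in> C"
  by (simp add: is_adjoint_def)
lemma is_adjoint_ip: "is_adjoint K T A \<Longrightarrow> x \<in> C \<Longrightarrow> y \<in> C \<Longrightarrow> hip K (T x) y = hip K x (A y)"
  by (simp add: is_adjoint_def)

lemma is_adjoint_ip_left:
  assumes "is_adjoint K T A" "x \<in> C" "y \<in> C" "T x \<in> C"
  shows "hip K (A y) x = hip K y (T x)"
  using ip_commute[of x "A y"] ip_commute[of "T x" y] is_adjoint_ip[OF assms(1-3)]
    is_adjoint_in[OF assms(1,3)] assms(2-4) by simp

lemma is_adjoint_adj: "is_adjoint K T A \<Longrightarrow> is_adjoint K T (adj K T)"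
  unfolding adj_def by (rule someI[of "is_adjoint K T"])

lemma adjoint_unique:
  assumes A: "is_adjoint K T A" and B: "is_adjoint K T B" and y: "y \<in> C"
  shows "A y = B y"
  by (rule vector_eqI_right)
    (use A B y in \<open>simp_all add: is_adjoint_in is_adjoint_ip[symmetric]\<close>)

lemma adj_eq: "is_adjoint K T A \<Longrightarrow> y \<in> C \<Longrightarrow> adj K T y = A y"
  using adjoint_unique is_adjoint_adj by blast

text \<open>The preimages of a convergent sequence under an isometry form a Cauchy sequence, and
  their limit is a preimage of the limit.\<close>

lemma isometry_range_limit:
  assumes V: "isometry K V" and g: "\<And>k. g k \<in> C" and x: "x \<in> C"
    and lim: "(\<lambda>k. hdist K (V (g k)) x) \<longlonglongrightarrow> 0"
  shows "x \<in> V ` C"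
proof -
  note lin = isometry_lin_op[OF V]
  have Vg: "V (g k) \<in> C" for k using g isometry_in[OF V] by simp
  have dist_g: "hdist K (g i) y = hdist K (V (g i)) (V y)" if "y \<in> C" for i y
    using g that isometry_hnorm[OF V] lin_op_minus[OF lin g that, symmetric] by (simp add: hdist_def)
  have "\<forall>e>0. \<exists>N. \<forall>m\<ge>N. \<forall>k\<ge>N. hdist K (g m) (g k) < e"
  proof (intro allI impI)
    fix e :: real assume e: "e > 0"
    then obtain N where N: "\<And>k. k \<ge> N \<Longrightarrow> hdist K (V (g k)) x < e/2"
      using order_tendstoD(2)[OF lim, of "e/2"] by (auto simp: eventually_sequentially)
    have "hdist K (g m) (g k) < e" if "m \<ge> N" "k \<ge> N" for m k
    proof -
      have "hdist K (V (g m)) (V (g k)) \<le> hdist K (V (g m)) x + hdist K (V (g k)) x"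
        using hdist_triangle[of "V (g m)" x "V (g k)"] hdist_commute[of x "V (g k)"] Vg x by simp
      then show ?thesis using N[OF \<open>m \<ge> N\<close>] N[OF \<open>k \<ge> N\<close>] dist_g[OF g] by simp
    qed
    then show "\<exists>N. \<forall>m\<ge>N. \<forall>k\<ge>N. hdist K (g m) (g k) < e" by blast
  qed
  then obtain y where y: "y \<in> C" and lim_y: "(\<lambda>k. hdist K (g k) y) \<longlonglongrightarrow> 0"
    using complete[of g] g by blast
  have "(\<lambda>k. hdist K (V (g k)) (V y)) \<longlonglongrightarrow> 0" using lim_y dist_g[OF y] by simp
  then have "x = V y" using limit_unique[of "\<lambda>k. V (g k)" x "V y"] Vg x isometry_in[OF V y] lim by blast
  then show ?thesis using y by blast
qed

lemma isometry_range_closed: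
  assumes V: "isometry K V"
  shows "closed_subspace K (V ` C)"
proof -
  note lin = isometry_lin_op[OF V]
  have "x \<in> V ` C"
    if f: "\<forall>k. f k \<in> V ` C" and x: "x \<in> C" and lim: "(\<lambda>k. hdist K (f k) x) \<longlonglongrightarrow> 0" for f x
  proof -
    obtain g where g: "\<And>k. g k \<in> C" and fg: "\<And>k. f k = V (g k)"
      using f unfolding image_iff Bex_def by metis
    show ?thesis using isometry_range_limit[OF V g x] lim fg by simp
  qed
  moreover have "hadd K x y \<in> V ` C" if "x \<in> V ` C" "y \<in> V ` C" for x y
  proof -
    from that obtain a b where "a \<in> C" "b \<in> C" "x = V a" "y = V b" by blast
    then show ?thesis using lin_op_add[OF lin, of a b] by (metis add_in image_eqI)
  qed
  moreover have "hscale K a x \<in> V ` C" if "x \<in> V ` C" for a x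
  proof -
    from that obtain b where "b \<in> C" "x = V b" by blast
    then show ?thesis using lin_op_scale[OF lin, of b a] by (metis scale_in image_eqI)
  qed
  moreover have "hzero K \<in> V ` C"
    using lin_op_zero[OF lin] zero_in by (metis image_eqI)
  ultimately show ?thesis
    unfolding closed_subspace_def using isometry_in[OF V] by blast
qed

text \<open>The adjoint of an isometry \<open>V\<close> sends \<open>y\<close> to the preimage under \<open>V\<close> of the orthogonal
  projection of \<open>y\<close> onto the range of \<open>V\<close>.\<close>

lemma isometry_is_adjoint:
  assumes V: "isometry K V"
  shows "is_adjoint K V (adj K V)"
proof -
  have ex: "\<exists>x. x \<in> C \<and> (\<forall>u\<in>C. hip K (V u) y = hip K u x)" if y: "y \<in> C" for y
  proof -
    obtain x where x: "x \<in> C" and orth: "\<forall>m\<in>V ` C. hip K (hminus K y (V x)) m = 0"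
      using projection_exists[OF isometry_range_closed[OF V] y] by blast
    have "hip K (V u) y = hip K u x" if u: "u \<in> C" for u
    proof -
      have Vx: "V x \<in> C" and Vu: "V u \<in> C" using isometry_in[OF V] x u by auto
      have "hip K (hminus K y (V x)) (V u) = 0" using orth u by blast
      then have "hip K (V u) y = hip K (V u) (V x)"
        using ip_commute[of "hminus K y (V x)" "V u"] y Vx Vu by simp
      then show ?thesis using isometry_ip[OF V u x] by simp
    qed
    then show ?thesis using x by blast
  qed
  have "is_adjoint K V (\<lambda>y. SOME x. x \<in> C \<and> (\<forall>u\<in>C. hip K (V u) y = hip K u x))"
    unfolding is_adjoint_def using someI_ex[OF ex] by blast
  then show ?thesis by (rule is_adjoint_adj)
qed

lemma adjoint_add:
  assumes "is_adjoint K T A" "\<And>x. x \<in> C \<Longrightarrow> T x \<in> C" "x \<in> C" "y \<in> C"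
  shows "A (hadd K x y) = hadd K (A x) (A y)"
  by (rule vector_eqI_right) (use assms in \<open>simp_all add: is_adjoint_in is_adjoint_ip[symmetric]\<close>)

lemma adjoint_scale:
  assumes "is_adjoint K T A" "\<And>x. x \<in> C \<Longrightarrow> T x \<in> C" "x \<in> C"
  shows "A (hscale K a x) = hscale K a (A x)"
  by (rule vector_eqI_right) (use assms in \<open>simp_all add: is_adjoint_in is_adjoint_ip[symmetric]\<close>)

lemma adjoint_zero:
  assumes "is_adjoint K T A" "\<And>x. x \<in> C \<Longrightarrow> T x \<in> C"
  shows "A (hzero K) = hzero K"
  using adjoint_scale[OF assms zero_in, of 0] is_adjoint_in[OF assms(1) zero_in] by simp

lemma adjoint_minus:
  assumes "is_adjoint K T A" "\<And>x. x \<in> C \<Longrightarrow> T x \<in> C" "x \<in> C" "y \<in> C"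
  shows "A (hminus K x y) = hminus K (A x) (A y)"
  using adjoint_add[OF assms(1,2,3)] adjoint_scale[OF assms(1,2,4)] assms(4) by (simp add: hminus_def)

lemma adjoint_isometry_inverse:
  assumes "isometry K V" "is_adjoint K V A" "x \<in> C"
  shows "A (V x) = x"
  by (rule vector_eqI_right)
    (use assms in \<open>simp_all add: is_adjoint_in is_adjoint_ip[symmetric] isometry_in isometry_ip\<close>)

lemma adjoint_isometry_hnorm_le:
  assumes V: "isometry K V" and A: "is_adjoint K V A" and y: "y \<in> C"
  shows "hnorm K (A y) \<le> hnorm K y"
proof -
  have Ay: "A y \<in> C" using A y by (rule is_adjoint_in)
  have "(hnorm K (A y))\<^sup>2 = Re (hip K (V (A y)) y)"
    using hnorm_sq[OF Ay] is_adjoint_ip[OF A Ay y] by simp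
  also have "\<dots> \<le> cmod (hip K (V (A y)) y)" by (rule complex_Re_le_cmod)
  also have "\<dots> \<le> hnorm K (A y) * hnorm K y"
    using cauchy_schwarz[OF isometry_in[OF V Ay] y] isometry_hnorm[OF V Ay] by simp
  finally show ?thesis using hnorm_nonneg[OF Ay] hnorm_nonneg[OF y]
    by (cases "hnorm K (A y) = 0") (auto simp: power2_eq_square)
qed

lemma unitary_adjoint_inverse:
  assumes U: "unitary K V" and A: "is_adjoint K V A" and y: "y \<in> C"
  shows "V (A y) = y"
proof -
  obtain x where "x \<in> C" "y = V x" using U y unfolding unitary_def by blast
  then show ?thesis using adjoint_isometry_inverse[OF _ A] U by (simp add: unitary_def)
qed

lemma isometry_if_adjoint_left_inverse:
  assumes T: "lin_op K T" and A: "is_adjoint K T A" and left: "\<And>x. x \<in> C \<Longrightarrow> A (T x) = x"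
  shows "isometry K T"
  unfolding isometry_def hnorm_def
  using T is_adjoint_ip[OF A] left lin_op_in[OF T] by simp

lemma unitary_if_adjoint_inverse:
  assumes T: "lin_op K T" and A: "is_adjoint K T A"
    and left: "\<And>x. x \<in> C \<Longrightarrow> A (T x) = x" and right: "\<And>y. y \<in> C \<Longrightarrow> T (A y) = y"
  shows "unitary K T"
proof -
  have "C \<subseteq> T ` C" using right is_adjoint_in[OF A] by (metis image_eqI subsetI)
  then show ?thesis
    using isometry_if_adjoint_left_inverse[OF T A left] lin_op_in[OF T]
    unfolding unitary_def by blast
qed

end

section \<open>Square-summable sequences\<close>

definition l2_space :: "'b cspace \<Rightarrow> (nat \<Rightarrow> 'b) cspace" where
  "l2_space K =
    \<lparr>hcarrier = {f. (\<forall>k. f k \<in> hcarrier K) \<and> summable (\<lambda>k. (hnorm K (f k))\<^sup>2)},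
     hadd = (\<lambda>f g k. hadd K (f k) (g k)), hscale = (\<lambda>a f k. hscale K a (f k)),
     hzero = (\<lambda>k. hzero K), hip = (\<lambda>f g. \<Sum>k. hip K (f k) (g k))\<rparr>"

lemma l2_space_simps [simp]:
  "hcarrier (l2_space K) = {f. (\<forall>k. f k \<in> hcarrier K) \<and> summable (\<lambda>k. (hnorm K (f k))\<^sup>2)}"
  "hadd (l2_space K) f g = (\<lambda>k. hadd K (f k) (g k))"
  "hscale (l2_space K) a f = (\<lambda>k. hscale K a (f k))"
  "hzero (l2_space K) = (\<lambda>k. hzero K)"
  "hminus (l2_space K) f g = (\<lambda>k. hminus K (f k) (g k))"
  by (simp_all add: l2_space_def hminus_def)

lemma l2_space_ip: "hip (l2_space K) f g = (\<Sum>k. hip K (f k) (g k))"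
  by (simp add: l2_space_def)

context chilbert_space
begin

abbreviation "L \<equiv> l2_space K"

lemma hnorm_sq_add_le: "x \<in> C \<Longrightarrow> y \<in> C \<Longrightarrow> (hnorm K (hadd K x y))\<^sup>2 \<le> 2 * (hnorm K x)\<^sup>2 + 2 * (hnorm K y)\<^sup>2"
  using parallelogram[of x y] zero_le_power2[of "hnorm K (hminus K x y)"] by linarith

lemma cmod_ip_le: "x \<in> C \<Longrightarrow> y \<in> C \<Longrightarrow> cmod (hip K x y) \<le> (hnorm K x)\<^sup>2 + (hnorm K y)\<^sup>2"
  using cauchy_schwarz[of x y] hnorm_nonneg[of x] hnorm_nonneg[of y]
    zero_le_power2[of "hnorm K x - hnorm K y"] mult_nonneg_nonneg[of "hnorm K x" "hnorm K y"]
  unfolding power2_diff by linarith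

lemma l2_ip_summable:
  assumes f: "f \<in> hcarrier L" and g: "g \<in> hcarrier L"
  shows "summable (\<lambda>k. hip K (f k) (g k))"
proof -
  have "summable (\<lambda>k. (hnorm K (f k))\<^sup>2 + (hnorm K (g k))\<^sup>2)"
    using f g by (simp add: summable_add)
  then have "summable (\<lambda>k. cmod (hip K (f k) (g k)))"
    by (rule summable_comparison_test') (use f g cmod_ip_le in auto)
  then show ?thesis by (rule summable_norm_cancel)
qed

lemma l2_ip_self:
  assumes f: "f \<in> hcarrier L"
  shows "hip L f f = complex_of_real (\<Sum>k. (hnorm K (f k))\<^sup>2)"
proof -
  have "(\<lambda>k. complex_of_real ((hnorm K (f k))\<^sup>2)) sums complex_of_real (\<Sum>k. (hnorm K (f k))\<^sup>2)"
    using f by (intro sums_of_real summable_sums) simp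
  then show ?thesis
    using f ip_self_eq_hnorm_sq by (simp add: l2_space_ip sums_unique[symmetric])
qed

lemma l2_hnorm_sq: "f \<in> hcarrier L \<Longrightarrow> (hnorm L f)\<^sup>2 = (\<Sum>k. (hnorm K (f k))\<^sup>2)"
  using suminf_nonneg[of "\<lambda>k. (hnorm K (f k))\<^sup>2"] by (simp add: hnorm_def l2_ip_self)

lemma l2_component_hnorm_sq_le:
  assumes f: "f \<in> hcarrier L"
  shows "(hnorm K (f k))\<^sup>2 \<le> (hnorm L f)\<^sup>2"
  using sum_le_suminf[of "\<lambda>k. (hnorm K (f k))\<^sup>2" "{k}"] f by (simp add: l2_hnorm_sq)

lemma l2_add_in:
  assumes f: "f \<in> hcarrier L" and g: "g \<in> hcarrier L"
  shows "hadd L f g \<in> hcarrier L"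
proof -
  have "summable (\<lambda>k. 2 * (hnorm K (f k))\<^sup>2 + 2 * (hnorm K (g k))\<^sup>2)"
    using f g by (simp add: summable_add summable_mult)
  then have "summable (\<lambda>k. (hnorm K (hadd K (f k) (g k)))\<^sup>2)"
    by (rule summable_comparison_test') (use f g hnorm_sq_add_le in auto)
  then show ?thesis using f g by simp
qed

lemma l2_scale_in:
  assumes f: "f \<in> hcarrier L"
  shows "hscale L a f \<in> hcarrier L"
proof -
  have "summable (\<lambda>k. (cmod a)\<^sup>2 * (hnorm K (f k))\<^sup>2)"
    using f by (simp add: summable_mult)
  then show ?thesis using f hnorm_scale by (simp add: power_mult_distrib)
qed

lemma l2_minus_in: "f \<in> hcarrier L \<Longrightarrow> g \<in> hcarrier L \<Longrightarrow> hminus L f g \<in> hcarrier L"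
  unfolding hminus_def by (intro l2_add_in l2_scale_in)

lemma l2_hdist_sq: "f \<in> hcarrier L \<Longrightarrow> g \<in> hcarrier L \<Longrightarrow>
  (hdist L f g)\<^sup>2 = (\<Sum>k. (hnorm K (hminus K (f k) (g k)))\<^sup>2)"
  using l2_hnorm_sq[OF l2_minus_in] by (simp add: hdist_def)

lemma l2_hdist_nonneg: "f \<in> hcarrier L \<Longrightarrow> g \<in> hcarrier L \<Longrightarrow> hdist L f g \<ge> 0"
  using l2_minus_in suminf_nonneg[of "\<lambda>k. (hnorm K (hminus K (f k) (g k)))\<^sup>2"]
  by (simp add: hdist_def hnorm_def l2_ip_self)

lemma l2_component_hdist_le:
  assumes f: "f \<in> hcarrier L" and g: "g \<in> hcarrier L"
  shows "hdist K (f k) (g k) \<le> hdist L f g"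
proof -
  have "(hdist K (f k) (g k))\<^sup>2 \<le> (hdist L f g)\<^sup>2"
    using l2_component_hnorm_sq_le[OF l2_minus_in[OF f g], of k] by (simp add: hdist_def)
  then show ?thesis using l2_hdist_nonneg[OF f g] power2_le_imp_le by blast
qed

lemma hnorm_minus_tendsto:
  assumes a: "a \<in> C" and b: "\<And>j. b j \<in> C" and c: "c \<in> C"
    and lim: "(\<lambda>j. hdist K (b j) c) \<longlonglongrightarrow> 0"
  shows "(\<lambda>j. hnorm K (hminus K a (b j))) \<longlonglongrightarrow> hnorm K (hminus K a c)"
proof -
  have "hminus K (hminus K a (b j)) (hminus K a c) = hminus K c (b j)" for j
    using a b c by (intro vector_eqI) simp_all
  then have "\<bar>hnorm K (hminus K a (b j)) - hnorm K (hminus K a c)\<bar> \<le> hdist K (b j) c" for j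
    using hnorm_minus_le_hdist[of "hminus K a (b j)" "hminus K a c"] hdist_commute[of c "b j"] a b c
    by (simp add: hdist_def)
  then have lower: "hnorm K (hminus K a c) - hdist K (b j) c \<le> hnorm K (hminus K a (b j))"
    and upper: "hnorm K (hminus K a (b j)) \<le> hnorm K (hminus K a c) + hdist K (b j) c" for j
    unfolding abs_le_iff by (smt (verit))+
  have lim_lower: "(\<lambda>j. hnorm K (hminus K a c) - hdist K (b j) c) \<longlonglongrightarrow> hnorm K (hminus K a c)"
    using tendsto_diff[OF tendsto_const lim] by simp
  have lim_upper: "(\<lambda>j. hnorm K (hminus K a c) + hdist K (b j) c) \<longlonglongrightarrow> hnorm K (hminus K a c)"
    using tendsto_add[OF tendsto_const lim] by simp
  show ?thesis
    by (rule tendsto_sandwich[OF _ _ lim_lower lim_upper])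
      (use lower upper in \<open>auto intro!: always_eventually\<close>)
qed

end

context chilbert_space
begin

lemma l2_limit_hdist_sq_le:
  assumes F: "\<And>m. F m \<in> hcarrier L" and g: "\<And>k. g k \<in> C"
    and lim: "\<And>k. (\<lambda>m. hdist K (F m k) (g k)) \<longlonglongrightarrow> 0"
    and N: "\<forall>m\<ge>N. \<forall>j\<ge>N. hdist L (F m) (F j) < e" and m: "m \<ge> N"
  shows "summable (\<lambda>k. (hnorm K (hminus K (F m k) (g k)))\<^sup>2)"
    and "(\<Sum>k. (hnorm K (hminus K (F m k) (g k)))\<^sup>2) \<le> e\<^sup>2"
proof -
  have FC: "F m k \<in> C" for m k using F by simp
  \<comment> \<open>every partial sum is a limit of partial sums of \<open>\<parallel>F m - F j\<parallel>\<^sup>2 \<le> e\<^sup>2\<close>\<close>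
  have partial: "(\<Sum>k<P. (hnorm K (hminus K (F m k) (g k)))\<^sup>2) \<le> e\<^sup>2" for P
  proof (rule LIMSEQ_le_const2)
    show "(\<lambda>j. \<Sum>k<P. (hnorm K (hminus K (F m k) (F j k)))\<^sup>2) \<longlonglongrightarrow>
          (\<Sum>k<P. (hnorm K (hminus K (F m k) (g k)))\<^sup>2)"
      by (intro tendsto_sum tendsto_power hnorm_minus_tendsto FC g lim)
    have "(\<Sum>k<P. (hnorm K (hminus K (F m k) (F j k)))\<^sup>2) \<le> e\<^sup>2" if j: "j \<ge> N" for j
    proof -
      have "(\<Sum>k<P. (hnorm K (hminus K (F m k) (F j k)))\<^sup>2)
          \<le> (\<Sum>k. (hnorm K (hminus K (F m k) (F j k)))\<^sup>2)"
        using l2_minus_in[OF F F] by (intro sum_le_suminf) auto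
      also have "\<dots> = (hdist L (F m) (F j))\<^sup>2"
        using l2_hdist_sq[OF F F] by simp
      also have "\<dots> \<le> e\<^sup>2"
        using N m j l2_hdist_nonneg[OF F F] by (simp add: power_mono less_imp_le)
      finally show ?thesis .
    qed
    then show "\<exists>N. \<forall>j\<ge>N. (\<Sum>k<P. (hnorm K (hminus K (F m k) (F j k)))\<^sup>2) \<le> e\<^sup>2"
      by blast
  qed
  show "summable (\<lambda>k. (hnorm K (hminus K (F m k) (g k)))\<^sup>2)"
    by (rule summableI_nonneg_bounded[OF _ partial]) simp
  then show "(\<Sum>k. (hnorm K (hminus K (F m k) (g k)))\<^sup>2) \<le> e\<^sup>2"
    using partial by (simp add: suminf_le_const)
qed

lemma l2_complete:
  assumes F: "\<And>m. F m \<in> hcarrier L"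
    and Cauchy: "\<forall>e>0. \<exists>N. \<forall>m\<ge>N. \<forall>j\<ge>N. hdist L (F m) (F j) < e"
  shows "\<exists>g\<in>hcarrier L. (\<lambda>m. hdist L (F m) g) \<longlonglongrightarrow> 0"
proof -
  have FC: "F m k \<in> C" for m k using F by simp
  have "\<exists>y\<in>C. (\<lambda>m. hdist K (F m k) y) \<longlonglongrightarrow> 0" for k
    using FC Cauchy l2_component_hdist_le[OF F F] by (intro complete) (meson le_less_trans)+
  then obtain g where g: "\<And>k. g k \<in> C" and lim: "\<And>k. (\<lambda>m. hdist K (F m k) (g k)) \<longlonglongrightarrow> 0"
    by metis
  note bound = l2_limit_hdist_sq_le[OF F g lim]
  obtain N0 where N0: "\<forall>m\<ge>N0. \<forall>j\<ge>N0. hdist L (F m) (F j) < 1"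
    using Cauchy zero_less_one by blast
  have "hminus L (F N0) g \<in> hcarrier L"
    using bound(1)[OF N0 order_refl] g FC by simp
  then have "hminus L (F N0) (hminus L (F N0) g) \<in> hcarrier L"
    by (rule l2_minus_in[OF F])
  moreover have "hminus L (F N0) (hminus L (F N0) g) = g"
    using FC g by (auto intro!: vector_eqI)
  ultimately have gL: "g \<in> hcarrier L" by metis
  have "(\<lambda>m. hdist L (F m) g) \<longlonglongrightarrow> 0"
  proof (rule LIMSEQ_I)
    fix r :: real assume r: "r > 0"
    then obtain N where N: "\<forall>m\<ge>N. \<forall>j\<ge>N. hdist L (F m) (F j) < r/2"
      using Cauchy half_gt_zero by blast
    have "norm (hdist L (F m) g - 0) < r" if m: "m \<ge> N" for m
    proof -
      have "(hdist L (F m) g)\<^sup>2 \<le> (r/2)\<^sup>2"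
        using l2_hdist_sq[OF F gL] bound(2)[OF N m] by simp
      then have "hdist L (F m) g \<le> r/2"
        using r by (simp add: power2_le_iff_abs_le)
      then show ?thesis using l2_hdist_nonneg[OF F gL] r by simp
    qed
    then show "\<exists>no. \<forall>m\<ge>no. norm (hdist L (F m) g - 0) < r" by blast
  qed
  then show ?thesis using gL by blast
qed

lemma l2_ip_add:
  assumes f: "f \<in> hcarrier L" and g: "g \<in> hcarrier L" and h: "h \<in> hcarrier L"
  shows "hip L (hadd L f g) h = hip L f h + hip L g h"
  using suminf_add[OF l2_ip_summable[OF f h] l2_ip_summable[OF g h]] f g h
  by (simp add: l2_space_ip)

lemma l2_ip_scale:
  assumes f: "f \<in> hcarrier L" and g: "g \<in> hcarrier L"
  shows "hip L (hscale L a f) g = a * hip L f g"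
  using suminf_mult[OF l2_ip_summable[OF f g], of a] f g by (simp add: l2_space_ip)

lemma l2_ip_commute:
  assumes f: "f \<in> hcarrier L" and g: "g \<in> hcarrier L"
  shows "hip L g f = cnj (hip L f g)"
proof -
  have "(\<lambda>k. cnj (hip K (f k) (g k))) sums cnj (\<Sum>k. hip K (f k) (g k))"
    by (subst sums_cnj) (rule summable_sums[OF l2_ip_summable[OF f g]])
  then show ?thesis
    using f g by (simp add: l2_space_ip cnj_ip sums_unique[symmetric])
qed

lemma l2_ip_self_eq_zero:
  assumes f: "f \<in> hcarrier L" and "hip L f f = 0"
  shows "f = hzero L"
proof -
  have "(\<Sum>k. (hnorm K (f k))\<^sup>2) = 0" using l2_ip_self[OF f] assms(2) by simp
  then have "(hnorm K (f k))\<^sup>2 = 0" for k using f by (subst (asm) suminf_eq_zero_iff) auto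
  then show ?thesis using f hnorm_eq_zero_iff by (simp add: fun_eq_iff)
qed

lemma l2_chilbert: "chilbert L"
  unfolding chilbert_def Let_def
proof (intro conjI ballI allI impI)
  fix F :: "nat \<Rightarrow> nat \<Rightarrow> 'a"
  assume "(\<forall>k. F k \<in> hcarrier L) \<and> (\<forall>e>0. \<exists>N. \<forall>m\<ge>N. \<forall>k\<ge>N. hdist L (F m) (F k) < e)"
  then show "\<exists>g\<in>hcarrier L. (\<lambda>k. hdist L (F k) g) \<longlonglongrightarrow> 0"
    using l2_complete by blast
next
  fix f assume f: "f \<in> hcarrier L"
  then have "0 \<le> (\<Sum>k. (hnorm K (f k))\<^sup>2)" by (intro suminf_nonneg) auto
  then show "Im (hip L f f) = 0" "0 \<le> Re (hip L f f)" using l2_ip_self[OF f] by simp_all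
  show "hip L f f = 0 \<Longrightarrow> f = hzero L" using l2_ip_self_eq_zero[OF f] .
  show "hadd L f (hzero L) = f" "hadd L f (hscale L (-1) f) = hzero L" "hscale L 1 f = f"
    using f by (simp_all add: fun_eq_iff add_neg)
  fix a b show "hscale L a (hscale L b f) = hscale L (a * b) f"
    "hscale L (a + b) f = hadd L (hscale L a f) (hscale L b f)"
    using f by (simp_all add: fun_eq_iff scale_add_left)
next
  fix f g assume f: "f \<in> hcarrier L" and g: "g \<in> hcarrier L"
  show "hadd L f g = hadd L g f" using f g by (simp add: fun_eq_iff add_commute)
  show "hip L g f = cnj (hip L f g)" using l2_ip_commute[OF f g] .
  fix a show "hscale L a (hadd L f g) = hadd L (hscale L a f) (hscale L a g)"
    "hip L (hscale L a f) g = a * hip L f g"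
    using f g l2_ip_scale by (simp_all add: fun_eq_iff scale_add_right)
next
  fix f g h assume "f \<in> hcarrier L" "g \<in> hcarrier L" "h \<in> hcarrier L"
  then show "hadd L (hadd L f g) h = hadd L f (hadd L g h)"
    "hip L (hadd L f g) h = hip L f h + hip L g h"
    using l2_ip_add by (simp_all add: fun_eq_iff add_assoc)
qed (use l2_add_in l2_scale_in in auto)

end

definition subspace_space :: "'b cspace \<Rightarrow> 'b set \<Rightarrow> 'b cspace" where
  "subspace_space K M = K\<lparr>hcarrier := M\<rparr>"

lemma subspace_space_simps [simp]:
  "hcarrier (subspace_space K M) = M" "hadd (subspace_space K M) = hadd K"
  "hscale (subspace_space K M) = hscale K" "hzero (subspace_space K M) = hzero K"
  "hip (subspace_space K M) = hip K" "hnorm (subspace_space K M) = hnorm K"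
  "hminus (subspace_space K M) = hminus K" "hdist (subspace_space K M) = hdist K"
  by (simp_all add: subspace_space_def hnorm_def[abs_def] hminus_def[abs_def] hdist_def[abs_def])

lemma (in chilbert_space) subspace_space_chilbert:
  assumes M: "closed_subspace K M"
  shows "chilbert (subspace_space K M)"
  unfolding chilbert_def Let_def subspace_space_simps
proof (intro conjI ballI allI impI)
  fix f :: "nat \<Rightarrow> 'a"
  assume "(\<forall>k. f k \<in> M) \<and> (\<forall>e>0. \<exists>N. \<forall>m\<ge>N. \<forall>k\<ge>N. hdist K (f m) (f k) < e)"
  then show "\<exists>x\<in>M. (\<lambda>k. hdist K (f k) x) \<longlonglongrightarrow> 0"
    using complete[of f] closed_subspaceD(1,5)[OF M] by blast
next
  fix x assume "x \<in> M"
  then have x: "x \<in> C" using closed_subspaceD(1)[OF M] by blast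
  then show "hadd K x (hzero K) = x" "hadd K x (hscale K (-1) x) = hzero K" "hscale K 1 x = x"
    "Im (hip K x x) = 0" "0 \<le> Re (hip K x x)"
    by (simp_all add: add_neg ip_self_Im ip_self_Re_nonneg)
  show "hip K x x = 0 \<Longrightarrow> x = hzero K" using x ip_self_eq_zero by blast
  fix a b show "hscale K a (hscale K b x) = hscale K (a * b) x"
    "hscale K (a + b) x = hadd K (hscale K a x) (hscale K b x)"
    using x by (simp_all add: scale_add_left)
next
  fix x y assume "x \<in> M" "y \<in> M"
  then have x: "x \<in> C" and y: "y \<in> C" using closed_subspaceD(1)[OF M] by blast+
  show "hadd K x y = hadd K y x" by (rule add_commute[OF x y])
  show "hip K y x = cnj (hip K x y)" by (rule ip_commute[OF x y])
  fix a show "hscale K a (hadd K x y) = hadd K (hscale K a x) (hscale K a y)"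
    "hip K (hscale K a x) y = a * hip K x y"
    using x y by (simp_all add: scale_add_right)
next
  fix x y w assume "x \<in> M" "y \<in> M" "w \<in> M"
  then have "x \<in> C" "y \<in> C" "w \<in> C" using closed_subspaceD(1)[OF M] by blast+
  then show "hadd K (hadd K x y) w = hadd K x (hadd K y w)"
    "hip K (hadd K x y) w = hip K x w + hip K y w"
    by (simp_all add: add_assoc)
qed (use closed_subspaceD(2,3,4)[OF M] in auto)

section \<open>Doubly non-commuting tuples\<close>

locale dnc_tuple = chilbert_space K for K :: "'a cspace" +
  fixes z :: "nat \<Rightarrow> nat \<Rightarrow> complex" and n :: nat and V :: "nat \<Rightarrow> 'a \<Rightarrow> 'a"
  assumes z_unimodular: "\<forall>i\<in>{1..n}. \<forall>j\<in>{1..n}. i \<noteq> j \<longrightarrow> cmod (z i j) = 1 \<and> z j i = cnj (z i j)"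
    and dnc: "dnc_isometries K z n V"
begin

abbreviation "adjV i \<equiv> adj K (V i)"

lemma V_isometry: "i \<in> {1..n} \<Longrightarrow> isometry K (V i)"
  using dnc by (simp add: dnc_isometries_def)
lemma V_is_adjoint: "i \<in> {1..n} \<Longrightarrow> is_adjoint K (V i) (adjV i)"
  using V_isometry isometry_is_adjoint by blast
lemma V_in [simp]: "i \<in> {1..n} \<Longrightarrow> x \<in> C \<Longrightarrow> V i x \<in> C"
  using V_isometry isometry_in by blast
lemma adjV_in [simp]: "i \<in> {1..n} \<Longrightarrow> x \<in> C \<Longrightarrow> adjV i x \<in> C"
  using V_is_adjoint is_adjoint_in by blast
lemma V_add [simp]: "i \<in> {1..n} \<Longrightarrow> x \<in> C \<Longrightarrow> y \<in> C \<Longrightarrow> V i (hadd K x y) = hadd K (V i x) (V i y)"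
  using V_isometry isometry_lin_op lin_op_add by blast
lemma V_scale [simp]: "i \<in> {1..n} \<Longrightarrow> x \<in> C \<Longrightarrow> V i (hscale K a x) = hscale K a (V i x)"
  using V_isometry isometry_lin_op lin_op_scale by blast
lemma V_zero [simp]: "i \<in> {1..n} \<Longrightarrow> V i (hzero K) = hzero K"
  using V_isometry isometry_lin_op lin_op_zero by blast
lemma V_minus [simp]: "i \<in> {1..n} \<Longrightarrow> x \<in> C \<Longrightarrow> y \<in> C \<Longrightarrow> V i (hminus K x y) = hminus K (V i x) (V i y)"
  using V_isometry isometry_lin_op lin_op_minus by blast
lemma adjV_add [simp]: "i \<in> {1..n} \<Longrightarrow> x \<in> C \<Longrightarrow> y \<in> C \<Longrightarrow> adjV i (hadd K x y) = hadd K (adjV i x) (adjV i y)"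
  using adjoint_add[OF V_is_adjoint] V_in by blast
lemma adjV_scale [simp]: "i \<in> {1..n} \<Longrightarrow> x \<in> C \<Longrightarrow> adjV i (hscale K a x) = hscale K a (adjV i x)"
  using adjoint_scale[OF V_is_adjoint] V_in by blast
lemma adjV_zero [simp]: "i \<in> {1..n} \<Longrightarrow> adjV i (hzero K) = hzero K"
  using adjoint_zero[OF V_is_adjoint] V_in by blast
lemma adjV_minus [simp]: "i \<in> {1..n} \<Longrightarrow> x \<in> C \<Longrightarrow> y \<in> C \<Longrightarrow> adjV i (hminus K x y) = hminus K (adjV i x) (adjV i y)"
  using adjoint_minus[OF V_is_adjoint] V_in by blast
lemma adjV_V [simp]: "i \<in> {1..n} \<Longrightarrow> x \<in> C \<Longrightarrow> adjV i (V i x) = x"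
  using adjoint_isometry_inverse[OF V_isometry V_is_adjoint] by blast
lemma ip_V_left: "i \<in> {1..n} \<Longrightarrow> x \<in> C \<Longrightarrow> y \<in> C \<Longrightarrow> hip K (V i x) y = hip K x (adjV i y)"
  using is_adjoint_ip[OF V_is_adjoint] by blast
lemma ip_V_V [simp]: "i \<in> {1..n} \<Longrightarrow> x \<in> C \<Longrightarrow> y \<in> C \<Longrightarrow> hip K (V i x) (V i y) = hip K x y"
  using isometry_ip[OF V_isometry] by blast
lemma hnorm_V [simp]: "i \<in> {1..n} \<Longrightarrow> x \<in> C \<Longrightarrow> hnorm K (V i x) = hnorm K x"
  using isometry_hnorm[OF V_isometry] by blast
lemma hnorm_adjV_le: "i \<in> {1..n} \<Longrightarrow> x \<in> C \<Longrightarrow> hnorm K (adjV i x) \<le> hnorm K x"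
  using adjoint_isometry_hnorm_le[OF V_isometry V_is_adjoint] by blast

lemma adjV_V_swap:
  "i \<in> {1..n} \<Longrightarrow> j \<in> {1..n} \<Longrightarrow> i \<noteq> j \<Longrightarrow> x \<in> C \<Longrightarrow>
   adjV i (V j x) = hscale K (cnj (z i j)) (V j (adjV i x))"
  using dnc unfolding dnc_isometries_def by blast

lemma cmod_z: "i \<in> {1..n} \<Longrightarrow> j \<in> {1..n} \<Longrightarrow> i \<noteq> j \<Longrightarrow> cmod (z i j) = 1"
  using z_unimodular by blast

lemma z_mult_cnj_z: "i \<in> {1..n} \<Longrightarrow> j \<in> {1..n} \<Longrightarrow> i \<noteq> j \<Longrightarrow> z i j * cnj (z i j) = 1"
  using cmod_z complex_norm_square[of "z i j"] by simp

lemma cnj_z_mult_z: "i \<in> {1..n} \<Longrightarrow> j \<in> {1..n} \<Longrightarrow> i \<noteq> j \<Longrightarrow> cnj (z i j) * z i j = 1"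
  using z_mult_cnj_z by (simp add: mult.commute)

lemma z_swap: "i \<in> {1..n} \<Longrightarrow> j \<in> {1..n} \<Longrightarrow> i \<noteq> j \<Longrightarrow> z j i = cnj (z i j)"
  using z_unimodular by blast

text \<open>Both sides are vectors of norm \<open>\<parallel>x\<parallel>\<close> whose inner product is \<open>\<parallel>x\<parallel>\<^sup>2\<close> after the phase
  is accounted for, so they coincide.\<close>

lemma V_commute:
  assumes i: "i \<in> {1..n}" and j: "j \<in> {1..n}" and ij: "i \<noteq> j" and x: "x \<in> C"
  shows "V i (V j x) = hscale K (z i j) (V j (V i x))"
proof -
  define u where "u = V i (V j x)"
  define w where "w = V j (V i x)"
  have uC: "u \<in> C" and wC: "w \<in> C" using u_def w_def i j x by auto
  have uw: "hip K u w = z i j * hip K x x"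
  proof -
    have "hip K u w = hip K (V j x) (adjV i w)" unfolding u_def using ip_V_left i j x wC by simp
    also have "adjV i w = hscale K (cnj (z i j)) (V j x)"
      unfolding w_def using adjV_V_swap[OF i j ij, of "V i x"] i j x by simp
    finally show ?thesis using i j x by simp
  qed
  have wu: "hip K w u = cnj (z i j) * hip K x x"
    using ip_commute[OF uC wC] uw cnj_ip[OF x x] by simp
  have "hip K (hminus K u (hscale K (z i j) w)) (hminus K u (hscale K (z i j) w))
      = hip K u u - cnj (z i j) * hip K u w - z i j * hip K w u + z i j * cnj (z i j) * hip K w w"
    using uC wC by (simp add: algebra_simps)
  also have "\<dots> = hip K x x * (1 - cnj (z i j) * z i j)"
    using uw wu i j x by (simp add: u_def w_def algebra_simps)
  also have "\<dots> = 0" using cnj_z_mult_z[OF i j ij] by simp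
  finally have "hminus K u (hscale K (z i j) w) = hzero K" using ip_self_eq_zero uC wC by simp
  then show ?thesis using eq_if_minus_eq_zero uC wC u_def w_def by simp
qed

end

section \<open>Extending one isometry to a unitary\<close>

text \<open>\<open>ext_carrier\<close> models \<open>K \<oplus> D \<oplus> D \<oplus> \<dots>\<close>, with \<open>D = ker V\<^sub>p\<^sup>*\<close>, as the square-summable
  sequences whose entries after the first lie in \<open>D\<close>.\<close>

locale dnc_extension_step = dnc_tuple +
  fixes p :: nat
  assumes p: "p \<in> {1..n}"
begin

definition "defect = {x \<in> C. adjV p x = hzero K}"
definition "defect_proj h = hminus K h (V p (adjV p h))"
definition "ext_carrier = {f \<in> hcarrier L. \<forall>k. f (Suc k) \<in> defect}"
definition "ext_space = subspace_space L ext_carrier"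
definition "ext_embed x = (\<lambda>k::nat. if k = 0 then x else hzero K)"
definition "ext_shift f = (\<lambda>k. if k = 0 then hadd K (V p (f 0)) (f 1) else f (Suc k))"
definition "ext_shift_adj f =
  (\<lambda>k. if k = 0 then adjV p (f 0) else if k = 1 then defect_proj (f 0) else f (k - 1))"
definition "ext_diag j f = (\<lambda>k. hscale K (z p j ^ k) (V j (f k)))"
definition "ext_diag_adj j f = (\<lambda>k. hscale K (cnj (z p j) ^ k) (adjV j (f k)))"

lemma p_in [simp]: "p \<in> {1..n}" and p_bounds [simp]: "Suc 0 \<le> p" "p \<le> n"
  using p by auto

lemma defect_in: "x \<in> defect \<Longrightarrow> x \<in> C"
  by (simp add: defect_def)
lemma adjV_defect: "x \<in> defect \<Longrightarrow> adjV p x = hzero K"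
  by (simp add: defect_def)
lemma defect_proj_in: "h \<in> C \<Longrightarrow> defect_proj h \<in> defect"
  unfolding defect_proj_def defect_def by simp

lemma defect_orthogonal_range: "x \<in> defect \<Longrightarrow> y \<in> C \<Longrightarrow> hip K x (V p y) = 0"
  using ip_V_left[of p y x] ip_commute[of "V p y" x] adjV_defect defect_in by simp

lemma defect_closed_subspace: "closed_subspace K defect"
  unfolding closed_subspace_def
proof (intro conjI ballI allI impI)
  fix f x assume f: "(\<forall>k. f k \<in> defect) \<and> x \<in> C \<and> (\<lambda>k. hdist K (f k) x) \<longlonglongrightarrow> 0"
  then have fC: "f k \<in> C" for k using defect_in by blast
  \<comment> \<open>\<open>V\<^sub>p\<^sup>*\<close> is a contraction vanishing on the \<open>f k\<close>\<close>
  have "hnorm K (adjV p x) \<le> hdist K (f k) x" for k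
  proof -
    have "adjV p x = adjV p (hminus K x (f k))"
      using f fC adjV_defect by (simp add: hminus_def)
    then show ?thesis
      using hnorm_adjV_le[of p "hminus K x (f k)"] hdist_commute fC f by (simp add: hdist_def)
  qed
  then have "hnorm K (adjV p x) \<le> 0"
    using f by (intro tendsto_lowerbound[of "\<lambda>k. hdist K (f k) x"]) (auto intro: always_eventually)
  then show "x \<in> defect"
    using hnorm_nonneg[of "adjV p x"] hnorm_eq_zero_iff f by (simp add: defect_def)
qed (auto simp: defect_def)

lemma V_defect:
  assumes j: "j \<in> {1..n}" "j \<noteq> p" and x: "x \<in> defect"
  shows "V j x \<in> defect"
proof -
  have xC: "x \<in> C" using x defect_in by blast
  have "adjV p (V j x) = hscale K (cnj (z p j)) (V j (adjV p x))"
    using adjV_V_swap[of p j x] j xC by auto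
  then show ?thesis using x j xC unfolding defect_def by simp
qed

lemma adjV_defect_in:
  assumes j: "j \<in> {1..n}" "j \<noteq> p" and x: "x \<in> defect"
  shows "adjV j x \<in> defect"
proof -
  have xC: "x \<in> C" using x defect_in by blast
  have "adjV p (adjV j x) = hzero K"
  proof (rule vector_eqI_right)
    fix w assume w: "w \<in> C"
    have "hip K w (adjV p (adjV j x)) = hip K (V j (V p w)) x"
      using ip_V_left[of p w "adjV j x"] ip_V_left[of j "V p w" x] w xC j by simp
    also have "\<dots> = z j p * hip K (V j w) (adjV p x)"
      using V_commute[of j p w] ip_V_left[of p "V j w" x] w j xC by simp
    finally show "hip K w (adjV p (adjV j x)) = hip K w (hzero K)"
      using adjV_defect[OF x] w j by simp
  qed (use xC j in auto)
  then show ?thesis using xC j by (simp add: defect_def)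
qed

lemma ext_carrier_iff:
  "f \<in> ext_carrier \<longleftrightarrow>
     (\<forall>k. f k \<in> C) \<and> summable (\<lambda>k. (hnorm K (f k))\<^sup>2) \<and> (\<forall>k. f (Suc k) \<in> defect)"
  by (simp add: ext_carrier_def)

lemma ext_carrier_in: "f \<in> ext_carrier \<Longrightarrow> f k \<in> C"
  by (simp add: ext_carrier_iff)

lemma ext_space_simps [simp]:
  "hcarrier ext_space = ext_carrier" "hadd ext_space = hadd L" "hscale ext_space = hscale L"
  "hzero ext_space = hzero L" "hip ext_space = hip L" "hminus ext_space = hminus L"
  by (simp_all add: ext_space_def)

lemma ext_carrier_closed_subspace: "closed_subspace L ext_carrier"
  unfolding closed_subspace_def
proof (intro conjI allI ballI impI)
  fix F :: "nat \<Rightarrow> nat \<Rightarrow> 'a" and g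
  assume F: "(\<forall>m. F m \<in> ext_carrier) \<and> g \<in> hcarrier L \<and> (\<lambda>m. hdist L (F m) g) \<longlonglongrightarrow> 0"
  then have FL: "F m \<in> hcarrier L" and gL: "g \<in> hcarrier L" for m
    by (auto simp: ext_carrier_def)
  have "(\<lambda>m. hdist K (F m (Suc k)) (g (Suc k))) \<longlonglongrightarrow> 0" for k
  proof (rule tendsto_sandwich[of "\<lambda>m. 0" _ _ "\<lambda>m. hdist L (F m) g"])
    show "\<forall>\<^sub>F m in sequentially. 0 \<le> hdist K (F m (Suc k)) (g (Suc k))"
      using hdist_nonneg FL gL by (intro always_eventually) simp
    show "\<forall>\<^sub>F m in sequentially. hdist K (F m (Suc k)) (g (Suc k)) \<le> hdist L (F m) g"
      using l2_component_hdist_le[OF FL gL] by (intro always_eventually) blast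
  qed (use F in simp_all)
  moreover have "\<forall>m. F m (Suc k) \<in> defect" for k
    using F by (simp add: ext_carrier_def)
  ultimately have "g (Suc k) \<in> defect" for k
    using closed_subspaceD(5)[OF defect_closed_subspace, of "\<lambda>m. F m (Suc k)" "g (Suc k)"] gL
    by simp
  then show "g \<in> ext_carrier" using gL by (simp add: ext_carrier_def)
qed (use l2_add_in l2_scale_in closed_subspaceD(2,3,4)[OF defect_closed_subspace]
     in \<open>auto simp: ext_carrier_def\<close>)

lemma ext_space_chilbert: "chilbert ext_space"
  unfolding ext_space_def
  by (rule chilbert_space.subspace_space_chilbert[OF chilbert_space.intro[OF l2_chilbert]
        ext_carrier_closed_subspace])

lemma ext_space_chilbert_space: "chilbert_space ext_space"
  using ext_space_chilbert by (rule chilbert_space.intro)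

end

context dnc_extension_step
begin

lemma ext_embed_in:
  assumes x: "x \<in> C"
  shows "ext_embed x \<in> ext_carrier"
proof -
  have "summable (\<lambda>k. (hnorm K (ext_embed x (Suc k)))\<^sup>2)"
    by (simp add: ext_embed_def)
  then have "summable (\<lambda>k. (hnorm K (ext_embed x k))\<^sup>2)"
    by (rule iffD1[OF summable_Suc_iff])
  then show ?thesis
    using x closed_subspaceD(2)[OF defect_closed_subspace] by (simp add: ext_carrier_iff ext_embed_def)
qed

lemma ext_carrier_summable: "f \<in> ext_carrier \<Longrightarrow> summable (\<lambda>k. (hnorm K (f k))\<^sup>2)"
  by (simp add: ext_carrier_iff)

lemma ext_shift_in:
  assumes f: "f \<in> ext_carrier"
  shows "ext_shift f \<in> ext_carrier"
proof -
  have "summable (\<lambda>k. (hnorm K (f (Suc (Suc k))))\<^sup>2)"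
    using ext_carrier_summable[OF f] summable_Suc_iff[of "\<lambda>k. (hnorm K (f k))\<^sup>2"]
      summable_Suc_iff[of "\<lambda>k. (hnorm K (f (Suc k)))\<^sup>2"] by simp
  then have "summable (\<lambda>k. (hnorm K (ext_shift f k))\<^sup>2)"
    using summable_Suc_iff[of "\<lambda>k. (hnorm K (ext_shift f k))\<^sup>2"] by (simp add: ext_shift_def)
  then show ?thesis
    using f by (simp add: ext_carrier_iff ext_shift_def)
qed

lemma ext_shift_adj_in:
  assumes f: "f \<in> ext_carrier"
  shows "ext_shift_adj f \<in> ext_carrier"
proof -
  have "summable (\<lambda>k. (hnorm K (f (Suc k)))\<^sup>2)"
    using ext_carrier_summable[OF f] summable_Suc_iff[of "\<lambda>k. (hnorm K (f k))\<^sup>2"] by simp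
  then have "summable (\<lambda>k. (hnorm K (ext_shift_adj f k))\<^sup>2)"
    using summable_Suc_iff[of "\<lambda>k. (hnorm K (ext_shift_adj f k))\<^sup>2"]
      summable_Suc_iff[of "\<lambda>k. (hnorm K (ext_shift_adj f (Suc k)))\<^sup>2"]
    by (simp add: ext_shift_adj_def)
  moreover have "\<forall>k. ext_shift_adj f k \<in> C"
    using ext_carrier_in[OF f] defect_in[OF defect_proj_in] by (simp add: ext_shift_adj_def)
  moreover have "\<forall>k. ext_shift_adj f (Suc k) \<in> defect"
  proof
    fix k show "ext_shift_adj f (Suc k) \<in> defect"
      using f defect_proj_in ext_carrier_in by (cases k) (auto simp: ext_shift_adj_def ext_carrier_iff)
  qed
  ultimately show ?thesis by (simp add: ext_carrier_iff)
qed

lemma ext_diag_in: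
  assumes j: "j \<in> {1..n}" "j \<noteq> p" and f: "f \<in> ext_carrier"
  shows "ext_diag j f \<in> ext_carrier"
proof -
  have "hnorm K (ext_diag j f k) = hnorm K (f k)" for k
    using hnorm_scale ext_carrier_in[OF f] j cmod_z[of p j] by (simp add: ext_diag_def norm_power)
  moreover have "ext_diag j f k \<in> C" "ext_diag j f (Suc k) \<in> defect" for k
    using f j V_defect closed_subspaceD(4)[OF defect_closed_subspace]
    by (auto simp: ext_diag_def ext_carrier_iff)
  ultimately show ?thesis using f by (simp add: ext_carrier_iff)
qed

lemma ext_diag_adj_in:
  assumes j: "j \<in> {1..n}" "j \<noteq> p" and f: "f \<in> ext_carrier"
  shows "ext_diag_adj j f \<in> ext_carrier"
proof -
  have sq_le: "(hnorm K (ext_diag_adj j f k))\<^sup>2 \<le> (hnorm K (f k))\<^sup>2" for k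
  proof -
    have "hnorm K (ext_diag_adj j f k) = hnorm K (adjV j (f k))"
      using hnorm_scale ext_carrier_in[OF f] j cmod_z[of p j] by (simp add: ext_diag_adj_def norm_power)
    also have "\<dots> \<le> hnorm K (f k)"
      using hnorm_adjV_le j ext_carrier_in[OF f] by simp
    finally show ?thesis
      using hnorm_nonneg ext_carrier_in[OF f] j by (intro power_mono) (simp_all add: ext_diag_adj_def)
  qed
  have "summable (\<lambda>k. (hnorm K (ext_diag_adj j f k))\<^sup>2)"
    by (rule summable_comparison_test'[OF ext_carrier_summable[OF f]]) (use sq_le in simp)
  moreover have "ext_diag_adj j f k \<in> C" "ext_diag_adj j f (Suc k) \<in> defect" for k
    using f j adjV_defect_in closed_subspaceD(4)[OF defect_closed_subspace]
    by (auto simp: ext_diag_adj_def ext_carrier_iff)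
  ultimately show ?thesis by (simp add: ext_carrier_iff)
qed

end

lemma suminf_eq_merged_head:
  fixes a b :: "nat \<Rightarrow> 'b::real_normed_vector"
  assumes a: "summable a" and b: "summable b"
    and head: "a 0 = b 0 + b 1" and tail: "\<And>k. a (Suc k) = b (Suc (Suc k))"
  shows "suminf a = suminf b"
proof -
  have b1: "summable (\<lambda>k. b (Suc k))" using b summable_Suc_iff by blast
  have "suminf a = a 0 + (\<Sum>k. b (Suc (Suc k)))"
    using suminf_split_head[OF a] tail by (simp add: algebra_simps)
  also have "\<dots> = suminf b"
    using suminf_split_head[OF b] suminf_split_head[OF b1] head by (simp add: algebra_simps)
  finally show ?thesis .
qed

context dnc_extension_step
begin

lemma ext_shift_is_adjoint: "is_adjoint ext_space ext_shift ext_shift_adj"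
  unfolding is_adjoint_def ext_space_simps
proof (intro conjI ballI)
  fix g assume "g \<in> ext_carrier" then show "ext_shift_adj g \<in> ext_carrier" by (rule ext_shift_adj_in)
next
  fix f g assume f: "f \<in> ext_carrier" and g: "g \<in> ext_carrier"
  have fL: "f \<in> hcarrier L" and gL: "g \<in> hcarrier L" using f g by (simp_all add: ext_carrier_def)
  have f0: "f 0 \<in> C" and f1: "f 1 \<in> defect" and g0: "g 0 \<in> C"
    using f g ext_carrier_in by (auto simp: ext_carrier_iff)
  have "(\<Sum>k. hip K (ext_shift f k) (g k)) = (\<Sum>k. hip K (f k) (ext_shift_adj g k))"
  proof (rule suminf_eq_merged_head)
    show "summable (\<lambda>k. hip K (ext_shift f k) (g k))"
      using l2_ip_summable ext_shift_in[OF f] gL by (simp add: ext_carrier_def)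
    show "summable (\<lambda>k. hip K (f k) (ext_shift_adj g k))"
      using l2_ip_summable fL ext_shift_adj_in[OF g] by (simp add: ext_carrier_def)
    \<comment> \<open>\<open>f\<^sub>1 \<in> D\<close> is orthogonal to the range of \<open>V\<^sub>p\<close>\<close>
    show "hip K (ext_shift f 0) (g 0) = hip K (f 0) (ext_shift_adj g 0) + hip K (f 1) (ext_shift_adj g 1)"
      using f0 f1 g0 defect_in ip_V_left[of p "f 0" "g 0"] defect_orthogonal_range[OF f1, of "adjV p (g 0)"]
      by (simp add: ext_shift_def ext_shift_adj_def defect_proj_def)
  qed (simp add: ext_shift_def ext_shift_adj_def)
  then show "hip L (ext_shift f) g = hip L f (ext_shift_adj g)" by (simp add: l2_space_ip)
qed

lemma ext_shift_adj_ext_shift: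
  assumes f: "f \<in> ext_carrier"
  shows "ext_shift_adj (ext_shift f) = f"
proof
  fix k
  have f0: "f 0 \<in> C" and f1: "f 1 \<in> C" "adjV p (f 1) = hzero K"
    using f ext_carrier_in adjV_defect by (auto simp: ext_carrier_iff)
  have "defect_proj (hadd K (V p (f 0)) (f 1)) = f 1"
    unfolding defect_proj_def using f0 f1 by (intro vector_eqI) simp_all
  then show "ext_shift_adj (ext_shift f) k = f k"
    using f0 f1 by (cases "k = 0 \<or> k = 1") (auto simp: ext_shift_adj_def ext_shift_def)
qed

lemma ext_shift_ext_shift_adj:
  assumes g: "g \<in> ext_carrier"
  shows "ext_shift (ext_shift_adj g) = g"
proof
  fix k
  have g0: "g 0 \<in> C" using g ext_carrier_in by blast
  have "hadd K (V p (adjV p (g 0))) (defect_proj (g 0)) = g 0"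
    unfolding defect_proj_def using g0 by (intro vector_eqI) simp_all
  then show "ext_shift (ext_shift_adj g) k = g k"
    by (cases k) (simp_all add: ext_shift_adj_def ext_shift_def)
qed

lemma ext_shift_lin_op: "lin_op ext_space ext_shift"
  unfolding lin_op_def ext_space_simps
proof (intro conjI ballI allI)
  fix f assume "f \<in> ext_carrier" then show "ext_shift f \<in> ext_carrier" by (rule ext_shift_in)
next
  fix f g assume "f \<in> ext_carrier" "g \<in> ext_carrier"
  then have "f 0 \<in> C" "f 1 \<in> C" "g 0 \<in> C" "g 1 \<in> C" using ext_carrier_in by auto
  then show "ext_shift (hadd L f g) = hadd L (ext_shift f) (ext_shift g)"
    by (auto simp: ext_shift_def fun_eq_iff intro!: vector_eqI)
next
  fix a f assume "f \<in> ext_carrier"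
  then have "f 0 \<in> C" "f 1 \<in> C" using ext_carrier_in by auto
  then show "ext_shift (hscale L a f) = hscale L a (ext_shift f)"
    by (auto simp: ext_shift_def fun_eq_iff algebra_simps intro!: vector_eqI)
qed

lemma ext_shift_unitary: "unitary ext_space ext_shift"
  by (rule chilbert_space.unitary_if_adjoint_inverse[OF ext_space_chilbert_space ext_shift_lin_op
        ext_shift_is_adjoint]) (simp_all add: ext_shift_adj_ext_shift ext_shift_ext_shift_adj)

lemma adj_ext_shift: "f \<in> ext_carrier \<Longrightarrow> adj ext_space ext_shift f = ext_shift_adj f"
  using chilbert_space.adj_eq[OF ext_space_chilbert_space ext_shift_is_adjoint] by simp

lemma ext_diag_is_adjoint:
  assumes j: "j \<in> {1..n}" "j \<noteq> p"
  shows "is_adjoint ext_space (ext_diag j) (ext_diag_adj j)"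
  unfolding is_adjoint_def ext_space_simps
proof (intro conjI ballI)
  fix g assume "g \<in> ext_carrier" then show "ext_diag_adj j g \<in> ext_carrier" by (rule ext_diag_adj_in[OF j])
next
  fix f g assume f: "f \<in> ext_carrier" and g: "g \<in> ext_carrier"
  have "hip K (ext_diag j f k) (g k) = hip K (f k) (ext_diag_adj j g k)" for k
    using ip_V_left[of j "f k" "g k"] ext_carrier_in[OF f] ext_carrier_in[OF g] j
    by (simp add: ext_diag_def ext_diag_adj_def)
  then show "hip L (ext_diag j f) g = hip L f (ext_diag_adj j g)" by (simp add: l2_space_ip)
qed

lemma ext_diag_adj_ext_diag:
  assumes j: "j \<in> {1..n}" "j \<noteq> p" and f: "f \<in> ext_carrier"
  shows "ext_diag_adj j (ext_diag j f) = f"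
proof
  fix k
  have "cnj (z p j) ^ k * z p j ^ k = 1"
    using cnj_z_mult_z[of p j] j by (simp add: power_mult_distrib[symmetric])
  then show "ext_diag_adj j (ext_diag j f) k = f k"
    using ext_carrier_in[OF f] j by (simp add: ext_diag_def ext_diag_adj_def)
qed

lemma ext_diag_ext_diag_adj:
  assumes j: "j \<in> {1..n}" "j \<noteq> p" and u: "unitary K (V j)" and g: "g \<in> ext_carrier"
  shows "ext_diag j (ext_diag_adj j g) = g"
proof
  fix k
  have "z p j ^ k * cnj (z p j) ^ k = 1"
    using z_mult_cnj_z[of p j] j by (simp add: power_mult_distrib[symmetric])
  moreover have "V j (adjV j (g k)) = g k"
    using unitary_adjoint_inverse[OF u V_is_adjoint] j ext_carrier_in[OF g] by blast
  ultimately show "ext_diag j (ext_diag_adj j g) k = g k"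
    using ext_carrier_in[OF g] j by (simp add: ext_diag_def ext_diag_adj_def)
qed

lemma ext_diag_lin_op:
  assumes j: "j \<in> {1..n}" "j \<noteq> p"
  shows "lin_op ext_space (ext_diag j)"
  unfolding lin_op_def ext_space_simps
  using ext_diag_in[OF j] ext_carrier_in j
  by (auto simp: ext_diag_def scale_add_right mult.commute)

lemma ext_diag_isometry:
  assumes j: "j \<in> {1..n}" "j \<noteq> p"
  shows "isometry ext_space (ext_diag j)"
  by (rule chilbert_space.isometry_if_adjoint_left_inverse[OF ext_space_chilbert_space
        ext_diag_lin_op[OF j] ext_diag_is_adjoint[OF j]]) (simp add: ext_diag_adj_ext_diag[OF j])

lemma ext_diag_unitary:
  assumes j: "j \<in> {1..n}" "j \<noteq> p" and u: "unitary K (V j)"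
  shows "unitary ext_space (ext_diag j)"
  by (rule chilbert_space.unitary_if_adjoint_inverse[OF ext_space_chilbert_space
        ext_diag_lin_op[OF j] ext_diag_is_adjoint[OF j]])
    (simp_all add: ext_diag_adj_ext_diag[OF j] ext_diag_ext_diag_adj[OF j u])

lemma adj_ext_diag:
  "j \<in> {1..n} \<Longrightarrow> j \<noteq> p \<Longrightarrow> f \<in> ext_carrier \<Longrightarrow> adj ext_space (ext_diag j) f = ext_diag_adj j f"
  using chilbert_space.adj_eq[OF ext_space_chilbert_space ext_diag_is_adjoint] by simp

end

context dnc_extension_step
begin

lemma ext_diag_adj_ext_diag_swap:
  assumes i: "i \<in> {1..n}" "i \<noteq> p" and j: "j \<in> {1..n}" "j \<noteq> p" and ij: "i \<noteq> j"
    and f: "f \<in> ext_carrier"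
  shows "ext_diag_adj i (ext_diag j f) = hscale L (cnj (z i j)) (ext_diag j (ext_diag_adj i f))"
proof
  fix k
  have fk: "f k \<in> C" using ext_carrier_in[OF f] .
  show "ext_diag_adj i (ext_diag j f) k = hscale L (cnj (z i j)) (ext_diag j (ext_diag_adj i f)) k"
    using fk i j adjV_V_swap[OF i(1) j(1) ij fk] by (simp add: ext_diag_def ext_diag_adj_def mult_ac)
qed

lemma ext_shift_adj_ext_diag_swap:
  assumes j: "j \<in> {1..n}" "j \<noteq> p" and f: "f \<in> ext_carrier"
  shows "ext_shift_adj (ext_diag j f) = hscale L (cnj (z p j)) (ext_diag j (ext_shift_adj f))"
proof
  fix k
  have f0: "f 0 \<in> C" using ext_carrier_in[OF f] .
  have z1: "cnj (z p j) * z p j = 1" using cnj_z_mult_z[of p j] j by simp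
  then have zz: "cnj (z p j) * (z p j * w) = w" for w by (metis mult.assoc mult_1)
  have swap: "adjV p (V j (f 0)) = hscale K (cnj (z p j)) (V j (adjV p (f 0)))"
    using adjV_V_swap[of p j "f 0"] j f0 by simp
  show "ext_shift_adj (ext_diag j f) k = hscale L (cnj (z p j)) (ext_diag j (ext_shift_adj f)) k"
  proof (cases "k = 0 \<or> k = 1")
    case True
    have "defect_proj (V j (f 0)) = hscale K (cnj (z p j) * z p j) (V j (defect_proj (f 0)))"
      unfolding defect_proj_def z1 using swap V_commute[of p j "adjV p (f 0)"] f0 j z1
      by (intro vector_eqI) (simp_all add: algebra_simps)
    moreover have "V j (defect_proj (f 0)) \<in> C"
      using defect_in[OF defect_proj_in] f0 j by simp
    ultimately show ?thesis
      using True swap f0 j by (auto simp: ext_diag_def ext_shift_adj_def)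
  next
    case False
    then obtain m where "k = Suc (Suc m)" by (metis One_nat_def not0_implies_Suc)
    then show ?thesis
      using ext_carrier_in[OF f] j by (simp add: ext_diag_def ext_shift_adj_def zz)
  qed
qed

lemma ext_diag_adj_ext_shift_swap:
  assumes i: "i \<in> {1..n}" "i \<noteq> p" and f: "f \<in> ext_carrier"
  shows "ext_diag_adj i (ext_shift f) = hscale L (cnj (z i p)) (ext_shift (ext_diag_adj i f))"
proof
  fix k
  have f0: "f 0 \<in> C" and f1: "f 1 \<in> C" using ext_carrier_in[OF f] by auto
  have zs: "cnj (z i p) = z p i" using z_swap[of p i] i by simp
  have z1: "z p i * cnj (z p i) = 1" using z_mult_cnj_z[of p i] i by simp
  then have zz: "z p i * (cnj (z p i) * w) = w" for w by (metis mult.assoc mult_1)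
  have swap: "adjV i (V p (f 0)) = hscale K (z p i) (V p (adjV i (f 0)))"
    using adjV_V_swap[of i p "f 0"] i f0 zs by simp
  show "ext_diag_adj i (ext_shift f) k = hscale L (cnj (z i p)) (ext_shift (ext_diag_adj i f)) k"
  proof (cases k)
    case 0
    then show ?thesis
      using swap f0 f1 i zs z1 by (simp add: ext_diag_adj_def ext_shift_def scale_add_right)
  next
    case (Suc m)
    then show ?thesis
      using ext_carrier_in[OF f] i zs by (simp add: ext_diag_adj_def ext_shift_def zz)
  qed
qed

definition "ext_op i = (if i = p then ext_shift else ext_diag i)"

lemma ext_op_isometry: "i \<in> {1..n} \<Longrightarrow> isometry ext_space (ext_op i)"
  using ext_shift_unitary ext_diag_isometry by (auto simp: ext_op_def unitary_def)

lemma ext_op_unitary: "i \<in> {1..n} \<Longrightarrow> unitary K (V i) \<Longrightarrow> unitary ext_space (ext_op i)"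
  using ext_shift_unitary ext_diag_unitary by (auto simp: ext_op_def)

lemma ext_op_dnc: "dnc_isometries ext_space z n ext_op"
  unfolding dnc_isometries_def
proof (intro conjI ballI impI)
  fix i assume "i \<in> {1..n}" then show "isometry ext_space (ext_op i)" by (rule ext_op_isometry)
next
  fix i j f assume i: "i \<in> {1..n}" and j: "j \<in> {1..n}" and ij: "i \<noteq> j" and f: "f \<in> hcarrier ext_space"
  then have f: "f \<in> ext_carrier" by simp
  consider "i = p" | "j = p" | "i \<noteq> p" "j \<noteq> p" using ij by blast
  then show "adj ext_space (ext_op i) (ext_op j f) =
      hscale ext_space (cnj (z i j)) (ext_op j (adj ext_space (ext_op i) f))"
  proof cases
    case 1
    then show ?thesis
      using ij j ext_shift_adj_ext_diag_swap f adj_ext_shift ext_diag_in ext_shift_adj_in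
      by (simp add: ext_op_def)
  next
    case 2
    then show ?thesis
      using ij i ext_diag_adj_ext_shift_swap f adj_ext_diag ext_shift_in ext_diag_adj_in
      by (simp add: ext_op_def)
  next
    case 3
    then show ?thesis
      using ij i j ext_diag_adj_ext_diag_swap f adj_ext_diag ext_diag_in ext_diag_adj_in
      by (simp add: ext_op_def)
  qed
qed

lemma ext_embed_isometric_embedding: "isometric_embedding K ext_space ext_embed"
  unfolding isometric_embedding_def ext_space_simps
proof (intro conjI ballI allI)
  fix x assume "x \<in> C" then show "ext_embed x \<in> ext_carrier" by (rule ext_embed_in)
next
  fix x y assume "x \<in> C" "y \<in> C"
  have "hip L (ext_embed x) (ext_embed y) = (\<Sum>k\<in>{0}. hip K (ext_embed x k) (ext_embed y k))"
    unfolding l2_space_ip by (rule suminf_finite) (auto simp: ext_embed_def)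
  then show "hip L (ext_embed x) (ext_embed y) = hip K x y" by (simp add: ext_embed_def)
qed (auto simp: ext_embed_def)

lemma ext_op_ext_embed: "i \<in> {1..n} \<Longrightarrow> x \<in> C \<Longrightarrow> ext_op i (ext_embed x) = ext_embed (V i x)"
  by (auto simp: ext_op_def ext_shift_def ext_diag_def ext_embed_def)

lemma adj_ext_op_ext_embed:
  "i \<in> {1..n} \<Longrightarrow> i \<noteq> p \<Longrightarrow> x \<in> C \<Longrightarrow> adj ext_space (ext_op i) (ext_embed x) = ext_embed (adjV i x)"
  using adj_ext_diag ext_embed_in by (auto simp: ext_op_def ext_diag_adj_def ext_embed_def)

end

section \<open>Transport along an injection\<close>

definition intertwines :: "'a cspace \<Rightarrow> ('a \<Rightarrow> 'b) \<Rightarrow> ('a \<Rightarrow> 'a) \<Rightarrow> ('b \<Rightarrow> 'b) \<Rightarrow> bool" where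
  "intertwines H J T S \<longleftrightarrow> (\<forall>x\<in>hcarrier H. S (J x) = J (T x))"

lemma intertwines_comp:
  assumes "isometric_embedding H K J" "intertwines H J T S" "intertwines K J' S R"
  shows "intertwines H (J' \<circ> J) T R"
  using assms unfolding intertwines_def isometric_embedding_def by simp

lemma isometric_embedding_comp:
  "isometric_embedding H K J \<Longrightarrow> isometric_embedding K K' J' \<Longrightarrow> isometric_embedding H K' (J' \<circ> J)"
  unfolding isometric_embedding_def by simp

definition transport_space :: "('b \<Rightarrow> 'c) \<Rightarrow> 'b cspace \<Rightarrow> 'c cspace" where
  "transport_space e K =
    \<lparr>hcarrier = e ` hcarrier K, hadd = (\<lambda>x y. e (hadd K (inv e x) (inv e y))),
     hscale = (\<lambda>a x. e (hscale K a (inv e x))), hzero = e (hzero K),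
     hip = (\<lambda>x y. hip K (inv e x) (inv e y))\<rparr>"

definition transport_op :: "('b \<Rightarrow> 'c) \<Rightarrow> ('b \<Rightarrow> 'b) \<Rightarrow> 'c \<Rightarrow> 'c" where
  "transport_op e T = (\<lambda>y. e (T (inv e y)))"

locale transport = chilbert_space K for K :: "'b cspace" +
  fixes e :: "'b \<Rightarrow> 'c"
  assumes inj: "inj e"
begin

abbreviation "T \<equiv> transport_space e K"

lemma inv_e [simp]: "inv e (e x) = x"
  using inj by (simp add: inv_f_f)
lemma e_eq_iff [simp]: "e x = e y \<longleftrightarrow> x = y"
  using inj by (auto dest: injD)

lemma transport_simps [simp]:
  "hcarrier T = e ` C" "hadd T (e x) (e y) = e (hadd K x y)" "hscale T a (e x) = e (hscale K a x)"
  "hzero T = e (hzero K)" "hip T (e x) (e y) = hip K x y" "hnorm T (e x) = hnorm K x"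
  "hminus T (e x) (e y) = e (hminus K x y)" "hdist T (e x) (e y) = hdist K x y"
  "transport_op e S (e x) = e (S x)"
  by (simp_all add: transport_space_def transport_op_def hnorm_def hminus_def hdist_def)

lemma transport_complete:
  assumes f: "\<forall>k. f k \<in> e ` C" and Cauchy: "\<forall>\<epsilon>>0. \<exists>N. \<forall>m\<ge>N. \<forall>k\<ge>N. hdist T (f m) (f k) < \<epsilon>"
  shows "\<exists>x\<in>e ` C. (\<lambda>k. hdist T (f k) x) \<longlonglongrightarrow> 0"
proof -
  define g where "g k = inv e (f k)" for k
  have fg: "f k = e (g k)" and g: "g k \<in> C" for k
  proof -
    obtain x where "x \<in> C" "f k = e x" using f by blast
    then show "f k = e (g k)" "g k \<in> C" unfolding g_def by simp_all
  qed
  then have "\<forall>\<epsilon>>0. \<exists>N. \<forall>m\<ge>N. \<forall>k\<ge>N. hdist K (g m) (g k) < \<epsilon>" using Cauchy by simp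
  then obtain x where "x \<in> C" "(\<lambda>k. hdist K (g k) x) \<longlonglongrightarrow> 0" using complete g by blast
  then show ?thesis using fg by (intro bexI[of _ "e x"]) auto
qed

lemma transport_chilbert: "chilbert T"
  unfolding chilbert_def Let_def
  using transport_complete ip_self_eq_zero
  by (auto simp: add_assoc add_neg scale_add_left scale_add_right cnj_ip ip_self_Im ip_self_Re_nonneg
      intro: add_commute)

lemma transport_lin_op: "lin_op K S \<Longrightarrow> lin_op T (transport_op e S)"
  by (auto simp: lin_op_def)

lemma transport_isometry: "isometry K S \<Longrightarrow> isometry T (transport_op e S)"
  using transport_lin_op unfolding isometry_def by auto

lemma transport_unitary:
  assumes "unitary K S"
  shows "unitary T (transport_op e S)"
proof -
  have "transport_op e S ` e ` C = e ` S ` C" by (auto simp: image_iff)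
  then show ?thesis using assms transport_isometry unfolding unitary_def by simp
qed

lemma transport_adj:
  assumes S: "isometry K S" and y: "y \<in> C"
  shows "adj T (transport_op e S) (e y) = e (adj K S y)"
proof -
  have "is_adjoint T (transport_op e S) (transport_op e (adj K S))"
    using isometry_is_adjoint[OF S] unfolding is_adjoint_def by auto
  then show ?thesis
    using chilbert_space.adj_eq[OF chilbert_space.intro[OF transport_chilbert]] y by simp
qed

lemma transport_dnc:
  assumes dnc: "dnc_isometries K z n V"
  shows "dnc_isometries T z n (\<lambda>i. transport_op e (V i))"
proof -
  have V: "isometry K (V i)" if "i \<in> {1..n}" for i using dnc that by (simp add: dnc_isometries_def)
  show ?thesis
    unfolding dnc_isometries_def
    using dnc V transport_isometry isometry_in transport_adj
    by (auto simp: dnc_isometries_def)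
qed

lemma transport_isometric_embedding: "isometric_embedding K T e"
  unfolding isometric_embedding_def by simp

lemma transport_intertwines: "intertwines K e S (transport_op e S)"
  unfolding intertwines_def by simp

lemma transport_intertwines_adj:
  "isometry K S \<Longrightarrow> intertwines K e (adj K S) (adj T (transport_op e S))"
  unfolding intertwines_def using transport_adj by simp

end

section \<open>Iterating the extension\<close>

definition dnc_unitary_extension ::
  "'a cspace \<Rightarrow> (nat \<Rightarrow> nat \<Rightarrow> complex) \<Rightarrow> nat \<Rightarrow> (nat \<Rightarrow> 'a \<Rightarrow> 'a) \<Rightarrow> nat \<Rightarrow>
   'b cspace \<Rightarrow> ('a \<Rightarrow> 'b) \<Rightarrow> (nat \<Rightarrow> 'b \<Rightarrow> 'b) \<Rightarrow> bool" where
  "dnc_unitary_extension H z n V m K J U \<longleftrightarrow>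
     chilbert K \<and> isometric_embedding H K J \<and> dnc_isometries K z n U \<and>
     (\<forall>i\<in>{1..m}. unitary K (U i)) \<and> (\<forall>i\<in>{1..n}. unitary H (V i) \<longrightarrow> unitary K (U i)) \<and>
     (\<forall>i\<in>{1..n}. intertwines H J (V i) (U i)) \<and>
     (\<forall>i\<in>{Suc m..n}. intertwines H J (adj H (V i)) (adj K (U i)))"

lemma dnc_unitary_extension_trans:
  assumes "dnc_unitary_extension H z n V m K J U" "dnc_unitary_extension K z n U m' K' J' U'" "m \<le> m'"
  shows "dnc_unitary_extension H z n V m' K' (J' \<circ> J) U'"
proof -
  note e1 = assms(1)[unfolded dnc_unitary_extension_def]
    and e2 = assms(2)[unfolded dnc_unitary_extension_def]
  have "{Suc m'..n} \<subseteq> {Suc m..n}" using assms(3) by auto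
  then have "\<forall>i\<in>{Suc m'..n}. intertwines H (J' \<circ> J) (adj H (V i)) (adj K' (U' i))"
    using e1 e2 intertwines_comp by blast
  moreover have "\<forall>i\<in>{1..n}. intertwines H (J' \<circ> J) (V i) (U' i)"
    using e1 e2 intertwines_comp by blast
  ultimately show ?thesis
    using e1 e2 isometric_embedding_comp unfolding dnc_unitary_extension_def by blast
qed

lemma (in transport) transport_dnc_unitary_extension:
  assumes "dnc_isometries K z n V" "\<forall>i\<in>{1..m}. unitary K (V i)"
  shows "dnc_unitary_extension K z n V m T e (\<lambda>i. transport_op e (V i))"
proof -
  have "isometry K (V i)" if "i \<in> {1..n}" for i
    using assms(1) that by (simp add: dnc_isometries_def)
  then show ?thesis
    unfolding dnc_unitary_extension_def
    using assms transport_chilbert transport_isometric_embedding transport_dnc transport_unitary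
      transport_intertwines transport_intertwines_adj
    by simp
qed

theorem dnc_unitary_extension_step:
  fixes K :: "'b cspace"
  assumes "chilbert K" "dnc_tuple K z n V" and m_le: "Suc m \<le> n"
    and unitary: "\<forall>i\<in>{1..m}. unitary K (V i)"
  shows "\<exists>(K' :: (nat \<Rightarrow> 'b) cspace) J V'. dnc_unitary_extension K z n V (Suc m) K' J V'"
proof -
  interpret dnc_extension_step K z n V "Suc m"
    using assms by (intro dnc_extension_step.intro dnc_extension_step_axioms.intro) simp_all
  have "unitary ext_space (ext_op i)" if i: "i \<in> {1..Suc m}" for i
  proof (cases "i = Suc m")
    case True
    then show ?thesis using ext_shift_unitary by (simp add: ext_op_def)
  next
    case False
    then have "i \<in> {1..m}" using i by auto
    moreover have "i \<in> {1..n}" using calculation m_le by (simp del: p_bounds)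
    ultimately show ?thesis using unitary ext_op_unitary[of i] by blast
  qed
  then show ?thesis
    unfolding dnc_unitary_extension_def intertwines_def
    using ext_space_chilbert ext_embed_isometric_embedding ext_op_dnc ext_op_unitary ext_op_ext_embed
      adj_ext_op_ext_embed
    by (intro exI[of _ ext_space] exI[of _ ext_embed] exI[of _ ext_op]) auto
qed

text \<open>The extension must live on one fixed type; the sequences \<open>nat \<Rightarrow> int list \<Rightarrow> 'a\<close> produced by a
  step are folded back into \<open>int list \<Rightarrow> 'a\<close> by using the index as the head of the list.\<close>

definition seq_encode :: "(nat \<Rightarrow> int list \<Rightarrow> 'a) \<Rightarrow> int list \<Rightarrow> 'a" where
  "seq_encode g r = (case r of [] \<Rightarrow> g 0 [] | k # r' \<Rightarrow> g (nat k) r')"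

lemma inj_seq_encode: "inj seq_encode"
proof (rule injI)
  fix g h :: "nat \<Rightarrow> int list \<Rightarrow> 'a"
  assume "seq_encode g = seq_encode h"
  then have "seq_encode g (int k # r) = seq_encode h (int k # r)" for k r by simp
  then show "g = h" by (simp add: seq_encode_def fun_eq_iff)
qed

lemma dnc_unitary_extension_exists:
  fixes H :: "'a cspace"
  assumes H: "chilbert H" and tuple: "dnc_tuple H z n V" and m: "m \<le> n"
  shows "\<exists>(K :: (int list \<Rightarrow> 'a) cspace) J U. dnc_unitary_extension H z n V m K J U"
  using m
proof (induction m)
  case 0
  interpret transport H "\<lambda>x (_::int list). x"
    by (intro transport.intro transport_axioms.intro H chilbert_space.intro) (simp add: inj_def fun_eq_iff)
  show ?case
    using transport_dnc_unitary_extension dnc_tuple.dnc[OF tuple] by fastforce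
next
  case (Suc m)
  then obtain K :: "(int list \<Rightarrow> 'a) cspace" and J U where ext: "dnc_unitary_extension H z n V m K J U"
    by auto
  then have K: "chilbert K" and unitary: "\<forall>i\<in>{1..m}. unitary K (U i)"
    and "dnc_isometries K z n U"
    unfolding dnc_unitary_extension_def by blast+
  then have "dnc_tuple K z n U"
    using dnc_tuple.z_unimodular[OF tuple]
    by (intro dnc_tuple.intro dnc_tuple_axioms.intro chilbert_space.intro)
  then obtain K2 :: "(nat \<Rightarrow> int list \<Rightarrow> 'a) cspace" and J2 U2
    where ext2: "dnc_unitary_extension K z n U (Suc m) K2 J2 U2"
    using dnc_unitary_extension_step[OF K _ Suc.prems unitary] by blast
  interpret transport K2 seq_encode
    using ext2 inj_seq_encode
    by (intro transport.intro transport_axioms.intro chilbert_space.intro) (auto simp: dnc_unitary_extension_def)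
  have "dnc_unitary_extension K2 z n U2 (Suc m) T seq_encode (\<lambda>i. transport_op seq_encode (U2 i))"
    using ext2 by (intro transport_dnc_unitary_extension) (auto simp: dnc_unitary_extension_def)
  then show ?case
    using dnc_unitary_extension_trans[OF dnc_unitary_extension_trans[OF ext ext2]] by fastforce
qed

lemma isometric_embedding_minus:
  assumes H: "chilbert H" and J: "isometric_embedding H K J"
    and "a \<in> hcarrier H" "b \<in> hcarrier H"
  shows "J (hminus H a b) = hminus K (J a) (J b)"
proof -
  interpret chilbert_space H using H by (rule chilbert_space.intro)
  show ?thesis using J assms(3,4) unfolding isometric_embedding_def hminus_def by simp
qed

lemma adj_eq_compression:
  assumes H: "chilbert H" and K: "chilbert K" and J: "isometric_embedding H K J"
    and U: "isometry K U" and V: "isometry H V" and UV: "intertwines H J V U"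
    and x: "x \<in> hcarrier H"
  shows "J (adj H V x) = orth_proj K (J ` hcarrier H) (adj K U (J x))"
proof -
  interpret H: chilbert_space H using H by (rule chilbert_space.intro)
  interpret K: chilbert_space K using K by (rule chilbert_space.intro)
  have J_in: "y \<in> hcarrier H \<Longrightarrow> J y \<in> hcarrier K" for y
    using J by (simp add: isometric_embedding_def)
  have J_ip: "y \<in> hcarrier H \<Longrightarrow> y' \<in> hcarrier H \<Longrightarrow> hip K (J y) (J y') = hip H y y'" for y y'
    using J by (simp add: isometric_embedding_def)
  have AH: "is_adjoint H V (adj H V)" and AK: "is_adjoint K U (adj K U)"
    using H.isometry_is_adjoint[OF V] K.isometry_is_adjoint[OF U] .
  have Vx: "adj H V x \<in> hcarrier H" using H.is_adjoint_in[OF AH x] .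
  show ?thesis
  proof (rule K.orth_proj_eqI[symmetric])
    show "J ` hcarrier H \<subseteq> hcarrier K" using J_in by blast
    show "hminus K a b \<in> J ` hcarrier H" if ab: "a \<in> J ` hcarrier H" "b \<in> J ` hcarrier H" for a b
    proof -
      obtain c d where "c \<in> hcarrier H" "d \<in> hcarrier H" "a = J c" "b = J d" using ab by blast
      then show ?thesis using isometric_embedding_minus[OF H J] H.minus_in by (metis image_eqI)
    qed
    show "adj K U (J x) \<in> hcarrier K" using K.is_adjoint_in[OF AK J_in[OF x]] .
    show "J (adj H V x) \<in> J ` hcarrier H" using Vx by blast
    have "hip K (adj K U (J x)) (J y) = hip K (J (adj H V x)) (J y)" if y: "y \<in> hcarrier H" for y
    proof -
      have "hip K (adj K U (J x)) (J y) = hip K (J x) (J (V y))"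
        using K.is_adjoint_ip_left[OF AK J_in[OF y] J_in[OF x]] K.isometry_in[OF U J_in[OF y]] UV y
        unfolding intertwines_def by simp
      also have "\<dots> = hip H (adj H V x) y"
        using J_ip H.is_adjoint_ip_left[OF AH y x] H.isometry_in[OF V] x y by simp
      finally show ?thesis using J_ip Vx y by simp
    qed
    then show "\<forall>m\<in>J ` hcarrier H. hip K (hminus K (adj K U (J x)) (J (adj H V x))) m = 0"
      using K.is_adjoint_in[OF AK J_in[OF x]] J_in Vx by auto
  qed
qed

theorem proposition6p1:
  fixes H :: "'a cspace"
    and n l :: nat
    and z :: "nat \<Rightarrow> nat \<Rightarrow> complex"
    and V :: "nat \<Rightarrow> 'a \<Rightarrow> 'a"
  assumes "chilbert H"
    and "l \<le> n"
    and "\<forall>i\<in>{1..n}. \<forall>j\<in>{1..n}. i \<noteq> j \<longrightarrow> cmod (z i j) = 1 \<and> z j i = cnj (z i j)"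
    and "dnc_isometries H z n V"
    and "\<forall>i\<in>{1..l}. pure_isometry H (V i)"
    and "\<forall>i\<in>{l+1..n}. unitary H (V i)"
  shows "\<exists>(K :: (int list \<Rightarrow> 'a) cspace) J U.
           chilbert K \<and> isometric_embedding H K J \<and>
           (\<forall>i\<in>{1..n}. unitary K (U i)) \<and>
           dnc_isometries K z n U \<and>
           (\<forall>i\<in>{1..n}. \<forall>x\<in>hcarrier H. U i (J x) \<in> J ` hcarrier H) \<and>
           (\<forall>i\<in>{1..n}. \<forall>x\<in>hcarrier H. U i (J x) = J (V i x)) \<and>
           (\<forall>i\<in>{l+1..n}. \<forall>x\<in>hcarrier H. adj K (U i) (J x) \<in> J ` hcarrier H) \<and>
           (\<forall>i\<in>{l+1..n}. \<forall>x\<in>hcarrier H. adj K (U i) (J x) = J (adj H (V i) x)) \<and>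
           (\<forall>i\<in>{1..l}. \<forall>x\<in>hcarrier H.
              J (adj H (V i) x) = orth_proj K (J ` hcarrier H) (adj K (U i) (J x)))"
proof -
  interpret dnc_tuple H z n V
    using assms(1,3,4) by (intro dnc_tuple.intro dnc_tuple_axioms.intro chilbert_space.intro)
  obtain K :: "(int list \<Rightarrow> 'a) cspace" and J U where ext: "dnc_unitary_extension H z n V l K J U"
    using dnc_unitary_extension_exists[OF assms(1) dnc_tuple_axioms assms(2)] by blast
  then have K: "chilbert K" and J: "isometric_embedding H K J" and dnc_U: "dnc_isometries K z n U"
    and UV: "\<forall>i\<in>{1..n}. intertwines H J (V i) (U i)"
    and UV_adj: "\<forall>i\<in>{Suc l..n}. intertwines H J (adjV i) (adj K (U i))"
    unfolding dnc_unitary_extension_def by blast+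
  have "\<forall>i\<in>{1..n}. unitary K (U i)"
    using ext assms(6) unfolding dnc_unitary_extension_def by (metis Suc_eq_plus1 atLeastAtMost_iff not_less_eq_eq)
  moreover have "\<forall>i\<in>{1..n}. isometry K (U i)" using dnc_U by (simp add: dnc_isometries_def)
  ultimately show ?thesis
    using K J dnc_U UV UV_adj adj_eq_compression[OF assms(1) K J _ V_isometry] assms(2)
    unfolding intertwines_def by (intro exI[of _ K] exI[of _ J] exI[of _ U]) auto
qed

end
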